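(* Let $L\ge2$, $\mathcal L=\llbracket1,L\rrbracket$, let $X_1,\dots,X_L$ be independent binary random variables with distributions $q_{X_l}$, let $q_{Z|X_{\mathcal L}}$ be a memoryless channel with finite output alphabet, and let $q_{X_{1:L}^{1:N}Z^{1:N}}=\prod_{i=1}^Nq_{X_{\mathcal L}Z}$. Fix $\xi>0$, $\delta^*_{\mathcal L}(N)=\log(2^L+3)\sqrt{\tfrac2N(L+\log N)}$, $\epsilon_2=2(\delta^*_{\mathcal L}(N)+\xi)$, $r_{X_l}=N(H(X_l|ZX_{1:l-1})-\epsilon_2/2)$. For each $l$, a hash function $G_{X_l}:\{0,1\}^N\to\{0,1\}^{r_{X_l}}$ is chosen uniformly at random (independently over $l$) from a two-universal family, and an encoder $e^{X_l}_N$ maps $N(H(X_l)+\epsilon_2/2)$ bits into $\{0,1\}^N$ such that with uniform input its output distribution is within variational distance $\delta(N)$ of $\prod_{i=1}^Nq_{X_l}$. The scheme runs over $k$ blocks: Block 1: $\widetilde X_{l,1}^{1:N}=e^{X_l}_N(E_{l,1})$ with uniform input $E_{l,1}$; Block $i\in\llbracket2,k\rrbracket$: $\widetilde E_{l,i}=G_{X_l}(\widetilde X_{l,i-1}^{1:N})$ and $\widetilde X_{l,i}^{1:N}=e^{X_l}_N(\widetilde E_{l,i}\|E_{l,i})$ with $E_{l,i}$ a uniform string of $N(I(X_l;ZX_{1:l-1})+\epsilon_2)$ bits and $\|$ concatenation; in each block $\widetilde Z_i^{1:N}$ is the channel output on $(\widetilde X_{l,i}^{1:N})_{l\in\mathcal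 L}$. All fresh randomness, channel noise of distinct blocks and hash choices are mutually independent, and $\widetilde p$ denotes induced distributions (including the random hash choice). Let $\delta^{*(0)}(N)=2/N+2^{L/2}2^{-N\xi/2}$. Then for every block $i\in\llbracket1,k\rrbracket$, $$\mathbb V\big(\widetilde p_{X_{1:L,i}^{1:N}Z_i^{1:N}},\,q_{X_{1:L}^{1:N}Z^{1:N}}\big)\le\delta^*_i(N),\qquad \delta^*_i(N)=L(\delta(N)+\delta^{*(0)}(N))\frac{L^i-1}{L-1}+L^{i+1}\delta(N).$$
   Context: $\mathbb V(p,q)=\sum_x|p(x)-q(x)|$, $\log$ base 2, $X_{1:l-1}=(X_1,\dots,X_{l-1})$; all lengths assumed to be integers. Two-universal hash families are in the sense of Carter–Wegman. *)

theory Defs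
  imports "HOL-Probability.Probability"
begin

definition entropy2 :: "'a pmf \<Rightarrow> real" where
  "entropy2 p = - (\<Sum>x\<in>set_pmf p. pmf p x * log 2 (pmf p x))"

definition cond_entropy2 :: "('a \<times> 'b) pmf \<Rightarrow> real" where
  "cond_entropy2 p = entropy2 p - entropy2 (map_pmf snd p)"

definition mutual_info2 :: "('a \<times> 'b) pmf \<Rightarrow> real" where
  "mutual_info2 p = entropy2 (map_pmf fst p) + entropy2 (map_pmf snd p) - entropy2 p"

text \<open>Variational distance V(p,q) = sum_x |p(x) - q(x)| (no factor 1/2).\<close>
definition var_dist :: "'a pmf \<Rightarrow> 'a pmf \<Rightarrow> real" where
  "var_dist p q = infsum (\<lambda>x. \<bar>pmf p x - pmf q x\<bar>) UNIV"

primrec list_pmf :: "'a pmf list \<Rightarrow> 'a list pmf" where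
  "list_pmf [] = return_pmf []"
| "list_pmf (p # ps) = bind_pmf p (\<lambda>x. map_pmf (Cons x) (list_pmf ps))"

definition unif_bits :: "nat \<Rightarrow> bool list pmf" where
  "unif_bits m = pmf_of_set {xs. length xs = m}"

definition two_universal :: "nat \<Rightarrow> nat \<Rightarrow> (bool list \<Rightarrow> bool list) set \<Rightarrow> bool" where
  "two_universal n r F \<longleftrightarrow> finite F \<and> F \<noteq> {} \<and>
     (\<forall>g\<in>F. \<forall>x. length x = n \<longrightarrow> length (g x) = r) \<and>
     (\<forall>x x'. length x = n \<longrightarrow> length x' = n \<longrightarrow> x \<noteq> x' \<longrightarrow>
        real (card {g\<in>F. g x = g x'}) \<le> real (card F) / 2 ^ r)"

text \<open>A symbol of X_{1:L} is a bool list of length L (entry l-1 is X_l).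
  qX l is the distribution of X_l (l in 1..L); W is the channel q_{Z|X_L}.\<close>
definition q_XL :: "nat \<Rightarrow> (nat \<Rightarrow> bool pmf) \<Rightarrow> bool list pmf" where
  "q_XL L qX = list_pmf (map qX [1..<L+1])"

definition q_joint :: "nat \<Rightarrow> (nat \<Rightarrow> bool pmf) \<Rightarrow> (bool list \<Rightarrow> 'z pmf) \<Rightarrow> (bool list \<times> 'z) pmf" where
  "q_joint L qX W = bind_pmf (q_XL L qX) (\<lambda>x. map_pmf (Pair x) (W x))"

definition q_Xl_ZXprev :: "nat \<Rightarrow> (nat \<Rightarrow> bool pmf) \<Rightarrow> (bool list \<Rightarrow> 'z pmf) \<Rightarrow> nat
     \<Rightarrow> (bool \<times> ('z \<times> bool list)) pmf" where
  "q_Xl_ZXprev L qX W l = map_pmf (\<lambda>(x, z). (x ! (l - 1), (z, take (l - 1) x))) (q_joint L qX W)"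

text \<open>A block: the list of the N symbols (X_{1:L}^j, Z^j), j = 1..N.
  q_{X^{1:N}_{1:L} Z^{1:N}} is the N-fold i.i.d. product.\<close>
definition q_block :: "nat \<Rightarrow> nat \<Rightarrow> (nat \<Rightarrow> bool pmf) \<Rightarrow> (bool list \<Rightarrow> 'z pmf) \<Rightarrow> (bool list \<times> 'z) list pmf" where
  "q_block L N qX W = replicate_pmf N (q_joint L qX W)"

text \<open>Xb is a block of channel inputs: Xb ! (l-1) = X_l^{1:N}. The memoryless channel
  is applied symbol-wise and the block is returned as the list of pairs (X_{1:L}^j, Z^j).\<close>
definition channel_block :: "nat \<Rightarrow> (bool list \<Rightarrow> 'z pmf) \<Rightarrow> bool list list \<Rightarrow> (bool list \<times> 'z) list pmf" where
  "channel_block N W Xb =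
     (let cols = map (\<lambda>j. map (\<lambda>xs. xs ! j) Xb) [0..<N]
      in map_pmf (zip cols) (list_pmf (map W cols)))"

definition first_block :: "nat \<Rightarrow> (nat \<Rightarrow> bool list \<Rightarrow> bool list) \<Rightarrow> (nat \<Rightarrow> nat) \<Rightarrow> bool list list pmf" where
  "first_block L enc m = list_pmf (map (\<lambda>l. map_pmf (enc l) (unif_bits (m l))) [1..<L+1])"

text \<open>Block i \<ge> 2: X_{l,i} = e_l(G_l(X_{l,i-1}) || E_{l,i}), E_{l,i} uniform of s l bits.
  Gs ! (l-1) is the hash G_{X_l}; prev ! (l-1) is X_{l,i-1}.\<close>
definition next_block :: "nat \<Rightarrow> (nat \<Rightarrow> bool list \<Rightarrow> bool list) \<Rightarrow> (nat \<Rightarrow> nat)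
     \<Rightarrow> (bool list \<Rightarrow> bool list) list \<Rightarrow> bool list list \<Rightarrow> bool list list pmf" where
  "next_block L enc s Gs prev =
     list_pmf (map (\<lambda>l. map_pmf (\<lambda>E. enc l ((Gs ! (l - 1)) (prev ! (l - 1)) @ E)) (unif_bits (s l))) [1..<L+1])"

primrec inputs_run :: "nat \<Rightarrow> (nat \<Rightarrow> bool list \<Rightarrow> bool list) \<Rightarrow> (nat \<Rightarrow> nat) \<Rightarrow> (nat \<Rightarrow> nat)
     \<Rightarrow> (bool list \<Rightarrow> bool list) list \<Rightarrow> nat \<Rightarrow> bool list list list pmf" where
  "inputs_run L enc m s Gs 0 = return_pmf []"
| "inputs_run L enc m s Gs (Suc n) =
     bind_pmf (inputs_run L enc m s Gs n) (\<lambda>Xs.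
       map_pmf (\<lambda>X. Xs @ [X]) (if Xs = [] then first_block L enc m else next_block L enc s Gs (last Xs)))"

definition scheme :: "nat \<Rightarrow> nat \<Rightarrow> (bool list \<Rightarrow> 'z pmf) \<Rightarrow> (nat \<Rightarrow> (bool list \<Rightarrow> bool list) set)
     \<Rightarrow> (nat \<Rightarrow> bool list \<Rightarrow> bool list) \<Rightarrow> (nat \<Rightarrow> nat) \<Rightarrow> (nat \<Rightarrow> nat) \<Rightarrow> nat
     \<Rightarrow> (bool list \<times> 'z) list list pmf" where
  "scheme L N W F enc m s k =
     bind_pmf (list_pmf (map (\<lambda>l. pmf_of_set (F l)) [1..<L+1])) (\<lambda>Gs.
     bind_pmf (inputs_run L enc m s Gs k) (\<lambda>Xss.
     list_pmf (map (channel_block N W) Xss)))"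

definition scheme_block :: "nat \<Rightarrow> nat \<Rightarrow> (bool list \<Rightarrow> 'z pmf) \<Rightarrow> (nat \<Rightarrow> (bool list \<Rightarrow> bool list) set)
     \<Rightarrow> (nat \<Rightarrow> bool list \<Rightarrow> bool list) \<Rightarrow> (nat \<Rightarrow> nat) \<Rightarrow> (nat \<Rightarrow> nat) \<Rightarrow> nat \<Rightarrow> nat
     \<Rightarrow> (bool list \<times> 'z) list pmf" where
  "scheme_block L N W F enc m s k i = map_pmf (\<lambda>bs. bs ! (i - 1)) (scheme L N W F enc m s k)"

end

theory Submission
  imports Defs
begin

text \<open>
  The users draw their hash functions and fresh bits independently, so the inputs of block i are a
  product over the users and block i is the channel applied to this product; its distance from q is
  at most L times the worst distance of a single user's input from the i.i.d. block.

  For one user, compare the pair (hash function G, input X) with (G, ideal i.i.d. block). One block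
  maps (G, x) to (G, enc (G x @ E)) with fresh uniform E. By the leftover hash lemma, the hash of
  an ideal block is 2^-(N \<xi>/2)-close to uniform jointly with G, up to twice the mass of the
  sequences of probability above 2^-(r + N \<xi>). Since r + N \<xi> \<le> N (H(X) - \<delta>*), a Chernoff bound
  on the self-information shows that this mass is at most 1/N. Hash output and fresh bits together
  are uniform on the whole encoder input, which the encoder maps \<delta>-close to the i.i.d. block. So
  each block adds at most 2^-(N \<xi>/2) + 2/N + \<delta>: the error grows only linearly in i, which is
  below the geometric bound of the statement.
\<close>

section \<open>Variational distance of finitely supported distributions\<close>

lemma var_dist_nonneg: "var_dist p q \<ge> 0"
  unfolding var_dist_def by (rule infsum_nonneg) simp

lemma var_dist_eq_sum:
  assumes "finite A" "set_pmf p \<subseteq> A" "set_pmf q \<subseteq> A"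
  shows "var_dist p q = (\<Sum>x\<in>A. \<bar>pmf p x - pmf q x\<bar>)"
proof -
  have "var_dist p q = infsum (\<lambda>x. \<bar>pmf p x - pmf q x\<bar>) A"
    unfolding var_dist_def
  proof (rule infsum_cong_neutral)
    fix x
    assume "x \<in> UNIV - A"
    then have "pmf p x = 0" "pmf q x = 0"
      using assms by (auto simp: set_pmf_iff)
    then show "\<bar>pmf p x - pmf q x\<bar> = 0"
      by simp
  qed auto
  then show ?thesis
    using assms(1) by simp
qed

lemma var_dist_triangle:
  assumes "finite (set_pmf p)" "finite (set_pmf q)" "finite (set_pmf r)"
  shows "var_dist p r \<le> var_dist p q + var_dist q r"
proof -
  let ?A = "set_pmf p \<union> set_pmf q \<union> set_pmf r"
  have A: "finite ?A" "set_pmf p \<subseteq> ?A" "set_pmf q \<subseteq> ?A" "set_pmf r \<subseteq> ?A"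
    using assms by auto
  have "var_dist p r = (\<Sum>x\<in>?A. \<bar>pmf p x - pmf r x\<bar>)"
    using A by (intro var_dist_eq_sum)
  also have "\<dots> \<le> (\<Sum>x\<in>?A. \<bar>pmf p x - pmf q x\<bar> + \<bar>pmf q x - pmf r x\<bar>)"
    by (intro sum_mono) linarith
  also have "\<dots> = var_dist p q + var_dist q r"
    using A by (simp add: sum.distrib var_dist_eq_sum[of ?A])
  finally show ?thesis .
qed

lemma pmf_bind_pmf_eq_sum:
  assumes "finite A" "set_pmf p \<subseteq> A"
  shows "pmf (bind_pmf p K) y = (\<Sum>x\<in>A. pmf p x * pmf (K x) y)"
  unfolding pmf_bind using assms by (subst integral_measure_pmf[of A]) auto

lemma var_dist_bind_pmf_le:
  assumes fin: "finite (set_pmf p)" "finite (set_pmf q)"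
    and fin_K: "\<And>x. x \<in> set_pmf p \<union> set_pmf q \<Longrightarrow> finite (set_pmf (K x))"
  shows "var_dist (bind_pmf p K) (bind_pmf q K) \<le> var_dist p q"
proof -
  let ?S = "set_pmf p \<union> set_pmf q"
  let ?Y = "\<Union>x\<in>?S. set_pmf (K x)"
  have S: "finite ?S" and Y: "finite ?Y"
    using fin fin_K by auto
  have "var_dist (bind_pmf p K) (bind_pmf q K)
      = (\<Sum>y\<in>?Y. \<bar>pmf (bind_pmf p K) y - pmf (bind_pmf q K) y\<bar>)"
    using Y by (rule var_dist_eq_sum) (auto simp: set_bind_pmf)
  also have "\<dots> = (\<Sum>y\<in>?Y. \<bar>\<Sum>x\<in>?S. (pmf p x - pmf q x) * pmf (K x) y\<bar>)"
    using S by (simp add: pmf_bind_pmf_eq_sum[of ?S] sum_subtractf left_diff_distrib)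
  also have "\<dots> \<le> (\<Sum>y\<in>?Y. \<Sum>x\<in>?S. \<bar>pmf p x - pmf q x\<bar> * pmf (K x) y)"
    by (intro sum_mono order.trans[OF sum_abs]) (simp add: abs_mult)
  also have "\<dots> = (\<Sum>x\<in>?S. \<bar>pmf p x - pmf q x\<bar> * (\<Sum>y\<in>?Y. pmf (K x) y))"
    by (subst sum.swap) (simp add: sum_distrib_left)
  also have "\<dots> = (\<Sum>x\<in>?S. \<bar>pmf p x - pmf q x\<bar>)"
    using Y by (intro sum.cong refl) (subst sum_pmf_eq_1, auto)
  also have "\<dots> = var_dist p q"
    using S by (intro var_dist_eq_sum[symmetric]) auto
  finally show ?thesis .
qed

lemma var_dist_map_pmf_le:
  assumes "finite (set_pmf p)" "finite (set_pmf q)"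
  shows "var_dist (map_pmf f p) (map_pmf f q) \<le> var_dist p q"
  using var_dist_bind_pmf_le[OF assms, of "\<lambda>x. return_pmf (f x)"] by (simp add: map_pmf_def)

lemma var_dist_bind_pmf_kernels_le:
  assumes fin: "finite (set_pmf p)"
    and fin_K: "\<And>x. x \<in> set_pmf p \<Longrightarrow> finite (set_pmf (K x))"
    and fin_K': "\<And>x. x \<in> set_pmf p \<Longrightarrow> finite (set_pmf (K' x))"
    and le: "\<And>x. x \<in> set_pmf p \<Longrightarrow> var_dist (K x) (K' x) \<le> c"
  shows "var_dist (bind_pmf p K) (bind_pmf p K') \<le> c"
proof -
  let ?S = "set_pmf p"
  let ?Y = "\<Union>x\<in>?S. set_pmf (K x) \<union> set_pmf (K' x)"
  have Y: "finite ?Y"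
    using fin fin_K fin_K' by auto
  have "var_dist (bind_pmf p K) (bind_pmf p K')
      = (\<Sum>y\<in>?Y. \<bar>pmf (bind_pmf p K) y - pmf (bind_pmf p K') y\<bar>)"
    using Y by (rule var_dist_eq_sum) (auto simp: set_bind_pmf)
  also have "\<dots> = (\<Sum>y\<in>?Y. \<bar>\<Sum>x\<in>?S. pmf p x * (pmf (K x) y - pmf (K' x) y)\<bar>)"
    using fin by (simp add: pmf_bind_pmf_eq_sum[of ?S] sum_subtractf right_diff_distrib)
  also have "\<dots> \<le> (\<Sum>y\<in>?Y. \<Sum>x\<in>?S. pmf p x * \<bar>pmf (K x) y - pmf (K' x) y\<bar>)"
    by (intro sum_mono order.trans[OF sum_abs]) (simp add: abs_mult)
  also have "\<dots> = (\<Sum>x\<in>?S. pmf p x * (\<Sum>y\<in>?Y. \<bar>pmf (K x) y - pmf (K' x) y\<bar>))"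
    by (subst sum.swap) (simp add: sum_distrib_left)
  also have "\<dots> = (\<Sum>x\<in>?S. pmf p x * var_dist (K x) (K' x))"
    using Y by (intro sum.cong refl arg_cong2[where f = "(*)"] var_dist_eq_sum[symmetric]) auto
  also have "\<dots> \<le> (\<Sum>x\<in>?S. pmf p x * c)"
    by (intro sum_mono mult_left_mono le) auto
  also have "\<dots> = c"
    using fin by (simp add: sum_distrib_right[symmetric] sum_pmf_eq_1)
  finally show ?thesis .
qed

lemma var_dist_bind_pmf_le_add:
  assumes fin: "finite (set_pmf p)" "finite (set_pmf q)"
    and fin_K: "\<And>x. x \<in> set_pmf p \<union> set_pmf q \<Longrightarrow> finite (set_pmf (K x))"
    and fin_K': "\<And>x. x \<in> set_pmf q \<Longrightarrow> finite (set_pmf (K' x))"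
    and le: "\<And>x. x \<in> set_pmf q \<Longrightarrow> var_dist (K x) (K' x) \<le> c"
  shows "var_dist (bind_pmf p K) (bind_pmf q K') \<le> var_dist p q + c"
proof -
  have "var_dist (bind_pmf p K) (bind_pmf q K')
      \<le> var_dist (bind_pmf p K) (bind_pmf q K) + var_dist (bind_pmf q K) (bind_pmf q K')"
    using fin fin_K fin_K' by (intro var_dist_triangle) (auto simp: set_bind_pmf)
  also have "\<dots> \<le> var_dist p q + c"
    using fin fin_K fin_K' le
    by (intro add_mono var_dist_bind_pmf_le var_dist_bind_pmf_kernels_le) auto
  finally show ?thesis .
qed

lemma var_dist_Pair_le:
  assumes "finite (set_pmf D)" "finite (set_pmf p)" "finite (set_pmf q)"
  shows "var_dist (bind_pmf D (\<lambda>G. map_pmf (Pair G) p)) (bind_pmf D (\<lambda>G. map_pmf (Pair G) q))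
    \<le> var_dist p q"
  using assms by (intro var_dist_bind_pmf_kernels_le var_dist_map_pmf_le) auto

section \<open>Products of distributions\<close>

lemma finite_set_list_pmf:
  "(\<And>p. p \<in> set ps \<Longrightarrow> finite (set_pmf p)) \<Longrightarrow> finite (set_pmf (list_pmf ps))"
  by (induction ps) (auto simp: set_bind_pmf)

lemma finite_set_replicate_pmf:
  "finite (set_pmf p) \<Longrightarrow> finite (set_pmf (replicate_pmf n p))"
  using finite_lists_length_eq[of "set_pmf p" n]
  by (simp add: set_replicate_pmf lists_eq_set conj_commute)

lemma map_pmf_nth_list_pmf: "j < length ps \<Longrightarrow> map_pmf (\<lambda>xs. xs ! j) (list_pmf ps) = ps ! j"
proof (induction ps arbitrary: j)
  case (Cons p ps)
  then show ?case
    by (cases j) (simp_all add: map_bind_pmf map_pmf_comp bind_pmf_const flip: map_pmf_def)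
qed simp

lemma list_pmf_bind_upt:
  "bind_pmf (list_pmf (map P [a..<b])) (\<lambda>xs. list_pmf (map (\<lambda>l. K l (xs ! (l - a))) [a..<b]))
   = list_pmf (map (\<lambda>l. bind_pmf (P l) (K l)) [a..<b])"
proof (induction "b - a" arbitrary: a)
  case 0
  then show ?case by (simp add: bind_return_pmf)
next
  case (Suc n)
  then have ab: "a < b" and n: "n = b - Suc a" by auto
  have shift: "map (\<lambda>l. K l ((x # xs) ! (l - a))) [Suc a..<b]
      = map (\<lambda>l. K l (xs ! (l - Suc a))) [Suc a..<b]"
    for x xs by (intro map_cong refl) (simp add: Suc_diff_Suc)
  have "bind_pmf (list_pmf (map P [a..<b])) (\<lambda>xs. list_pmf (map (\<lambda>l. K l (xs ! (l - a))) [a..<b]))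
      = bind_pmf (P a) (\<lambda>x. bind_pmf (K a x) (\<lambda>y. map_pmf (Cons y)
          (bind_pmf (list_pmf (map P [Suc a..<b]))
              (\<lambda>xs. list_pmf (map (\<lambda>l. K l (xs ! (l - Suc a))) [Suc a..<b])))))"
    using ab by (simp add: upt_conv_Cons bind_assoc_pmf bind_map_pmf map_bind_pmf shift)
      (subst bind_commute_pmf, rule refl)
  also have "\<dots> = list_pmf (map (\<lambda>l. bind_pmf (P l) (K l)) [a..<b])"
    using ab Suc.hyps(1)[OF n] by (simp add: upt_conv_Cons bind_assoc_pmf)
  finally show ?case .
qed

lemma replicate_pmf_Suc_pair: "replicate_pmf (Suc n) p
    = map_pmf (\<lambda>(x, xs). x # xs) (pair_pmf p (replicate_pmf n p))"
  by (simp add: pair_pmf_def map_pmf_def bind_assoc_pmf bind_return_pmf)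

lemma pmf_replicate_pmf:
  "length xs = n \<Longrightarrow> pmf (replicate_pmf n p) xs = prod_list (map (pmf p) xs)"
proof (induction n arbitrary: xs)
  case (Suc n)
  then obtain x ys where xs: "xs = x # ys" and ys: "length ys = n"
    by (cases xs) auto
  have "inj (\<lambda>(x, xs). x # xs)"
    by (auto simp: inj_def)
  then have "pmf (replicate_pmf (Suc n) p) ((\<lambda>(x, xs). x # xs) (x, ys))
      = pmf (pair_pmf p (replicate_pmf n p)) (x, ys)"
    unfolding replicate_pmf_Suc_pair by (rule pmf_map_inj')
  then show ?case
    using Suc.IH[OF ys] by (simp add: xs pmf_pair)
qed simp

lemma sum_prod_list_lists_length:
  fixes f :: "'a::finite \<Rightarrow> 'b::comm_semiring_1"
  shows "(\<Sum>xs\<in>{xs. length xs = n}. prod_list (map f xs)) = (\<Sum>a\<in>UNIV. f a) ^ n"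
proof (induction n)
  case (Suc n)
  have lists: "{xs :: 'a list. length xs = Suc n}
      = (\<lambda>(a, xs). a # xs) ` (UNIV \<times> {xs. length xs = n})"
    by (auto simp: length_Suc_conv image_iff)
  have inj: "inj_on (\<lambda>(a, xs). a # xs) (UNIV \<times> {xs :: 'a list. length xs = n})"
    by (auto simp: inj_on_def)
  have "(\<Sum>xs\<in>{xs. length xs = Suc n}. prod_list (map f xs))
      = (\<Sum>a\<in>UNIV. \<Sum>xs\<in>{xs. length xs = n}. f a * prod_list (map f xs))"
    unfolding lists sum.reindex[OF inj] by (simp add: sum.cartesian_product case_prod_beta)
  then show ?case
    by (simp add: Suc.IH sum_distrib_left[symmetric] sum_distrib_right[symmetric])
qed simp

lemma replicate_pmf_bind_Pair:
  "replicate_pmf n (bind_pmf p (\<lambda>x. map_pmf (Pair x) (K x)))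
   = bind_pmf (replicate_pmf n p) (\<lambda>xs. map_pmf (zip xs) (list_pmf (map K xs)))"
proof (induction n)
  case 0
  then show ?case by (simp add: bind_return_pmf bind_pmf_const)
next
  case (Suc n)
  let ?P = "bind_pmf p (\<lambda>x. map_pmf (Pair x) (K x))"
  have "replicate_pmf (Suc n) ?P
      = bind_pmf p (\<lambda>x. bind_pmf (K x) (\<lambda>z. map_pmf (Cons (x, z)) (replicate_pmf n ?P)))"
    by (simp only: replicate_pmf.simps) (simp add: bind_assoc_pmf map_pmf_def bind_return_pmf)
  also have "\<dots> = bind_pmf p (\<lambda>x. bind_pmf (K x) (\<lambda>z. bind_pmf (replicate_pmf n p)
        (\<lambda>xs. map_pmf (\<lambda>zs. (x, z) # zip xs zs) (list_pmf (map K xs)))))"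
    by (simp only: Suc.IH) (simp add: map_bind_pmf map_pmf_comp)
  also have "\<dots> = bind_pmf p (\<lambda>x. bind_pmf (replicate_pmf n p) (\<lambda>xs. bind_pmf (K x)
        (\<lambda>z. map_pmf (\<lambda>zs. (x, z) # zip xs zs) (list_pmf (map K xs)))))"
    by (rule bind_pmf_cong[OF refl], rule bind_commute_pmf)
  also have "\<dots> = bind_pmf (replicate_pmf (Suc n) p) (\<lambda>xs. map_pmf (zip xs) (list_pmf (map K xs)))"
    by (simp add: bind_assoc_pmf map_bind_pmf bind_map_pmf map_pmf_comp bind_return_pmf)
  finally show ?case .
qed

lemma replicate_pmf_bind_map_pmf:
  "replicate_pmf n (bind_pmf p (\<lambda>a. map_pmf (f a) q))
   = bind_pmf (replicate_pmf n p) (\<lambda>as. map_pmf (map2 f as) (replicate_pmf n q))"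
proof (induction n)
  case 0
  then show ?case by (simp add: bind_return_pmf bind_pmf_const)
next
  case (Suc n)
  let ?P = "bind_pmf p (\<lambda>a. map_pmf (f a) q)"
  have "replicate_pmf (Suc n) ?P
      = bind_pmf p (\<lambda>a. bind_pmf q (\<lambda>b. map_pmf (Cons (f a b)) (replicate_pmf n ?P)))"
    by (simp only: replicate_pmf.simps) (simp add: bind_assoc_pmf map_pmf_def bind_return_pmf)
  also have "\<dots> = bind_pmf p (\<lambda>a. bind_pmf q (\<lambda>b. bind_pmf (replicate_pmf n p)
        (\<lambda>as. map_pmf (\<lambda>bs. f a b # map2 f as bs) (replicate_pmf n q))))"
    by (simp only: Suc.IH) (simp add: map_bind_pmf map_pmf_comp)
  also have "\<dots> = bind_pmf p (\<lambda>a. bind_pmf (replicate_pmf n p) (\<lambda>as. bind_pmf q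
        (\<lambda>b. map_pmf (\<lambda>bs. f a b # map2 f as bs) (replicate_pmf n q))))"
    by (rule bind_pmf_cong[OF refl], rule bind_commute_pmf)
  also have "\<dots>
      = bind_pmf (replicate_pmf (Suc n) p) (\<lambda>as. map_pmf (map2 f as) (replicate_pmf (Suc n) q))"
    by (simp add: bind_assoc_pmf map_bind_pmf bind_map_pmf map_pmf_comp bind_return_pmf map_pmf_def)
  finally show ?case .
qed

text \<open>The let-bound cols of channel_block.\<close>

definition columns :: "nat \<Rightarrow> 'a list list \<Rightarrow> 'a list list" where
  "columns n xss = map (\<lambda>j. map (\<lambda>xs. xs ! j) xss) [0..<n]"

lemma columns_Cons: "length xs = n \<Longrightarrow> columns n (xs # xss) = map2 Cons xs (columns n xss)"
  unfolding columns_def by (rule nth_equalityI) auto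

lemma replicate_pmf_list_pmf:
  "replicate_pmf n (list_pmf ps) = map_pmf (columns n) (list_pmf (map (replicate_pmf n) ps))"
proof (induction ps)
  case Nil
  have "replicate_pmf n (return_pmf x) = return_pmf (replicate n x)" for x
    by (induction n) (simp_all add: bind_return_pmf)
  then show ?case
    by (simp add: columns_def map_replicate_const)
next
  case (Cons p ps)
  have "replicate_pmf n (list_pmf (p # ps))
      = bind_pmf (replicate_pmf n p) (\<lambda>xs. map_pmf (map2 Cons xs) (replicate_pmf n (list_pmf ps)))"
    by (simp add: replicate_pmf_bind_map_pmf)
  also have "\<dots> = bind_pmf (replicate_pmf n p)
      (\<lambda>xs. map_pmf (\<lambda>xss. columns n (xs # xss)) (list_pmf (map (replicate_pmf n) ps)))"
    by (rule bind_pmf_cong[OF refl]) (simp add: Cons.IH map_pmf_comp columns_Cons set_replicate_pmf)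
  also have "\<dots> = map_pmf (columns n) (list_pmf (map (replicate_pmf n) (p # ps)))"
    by (simp add: map_bind_pmf map_pmf_comp)
  finally show ?case .
qed

lemma var_dist_list_pmf_le_sum:
  assumes "\<And>x. x \<in> set xs \<Longrightarrow> finite (set_pmf (P x)) \<and> finite (set_pmf (Q x))"
  shows "var_dist (list_pmf (map P xs)) (list_pmf (map Q xs)) \<le> (\<Sum>x\<leftarrow>xs. var_dist (P x) (Q x))"
  using assms
proof (induction xs)
  case Nil
  then show ?case by (simp add: var_dist_def)
next
  case (Cons x xs)
  have fin: "finite (set_pmf (list_pmf (map P xs)))" "finite (set_pmf (list_pmf (map Q xs)))"
    using Cons.prems by (auto intro!: finite_set_list_pmf)
  have "var_dist (list_pmf (map P (x # xs))) (list_pmf (map Q (x # xs)))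
      \<le> var_dist (P x) (Q x) + var_dist (list_pmf (map P xs)) (list_pmf (map Q xs))"
    using Cons.prems fin by simp (intro var_dist_bind_pmf_le_add var_dist_map_pmf_le; simp)
  also have "\<dots> \<le> (\<Sum>x\<leftarrow>x # xs. var_dist (P x) (Q x))"
    using Cons by simp
  finally show ?case .
qed

lemma finite_bit_strings: "finite {xs :: bool list. length xs = n}"
  by (rule finite_list_length)

lemma card_bit_strings: "card {xs :: bool list. length xs = n} = 2 ^ n"
  using card_lists_length_eq[of "UNIV :: bool set" n] by simp

lemma bit_strings_nonempty: "{xs :: bool list. length xs = n} \<noteq> {}"
  using card_bit_strings[of n] by force

lemma set_pmf_unif_bits: "set_pmf (unif_bits n) = {xs. length xs = n}"
  unfolding unif_bits_def by (intro set_pmf_of_set finite_bit_strings bit_strings_nonempty)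

lemma pair_pmf_of_set:
  assumes "finite A" "A \<noteq> {}" "finite B" "B \<noteq> {}"
  shows "pair_pmf (pmf_of_set A) (pmf_of_set B) = pmf_of_set (A \<times> B)"
proof (rule pmf_eqI)
  fix z :: "'a \<times> 'b"
  show "pmf (pair_pmf (pmf_of_set A) (pmf_of_set B)) z = pmf (pmf_of_set (A \<times> B)) z"
    using assms by (cases z) (simp add: pmf_pair indicator_def card_cartesian_product)
qed

lemma unif_bits_append:
  "bind_pmf (unif_bits r) (\<lambda>xs. map_pmf (\<lambda>ys. xs @ ys) (unif_bits s)) = unif_bits (r + s)"
proof -
  let ?A = "{xs :: bool list. length xs = r}" and ?B = "{ys :: bool list. length ys = s}"
  have "bind_pmf (unif_bits r) (\<lambda>xs. map_pmf (\<lambda>ys. xs @ ys) (unif_bits s))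
      = map_pmf (\<lambda>(xs, ys). xs @ ys) (pair_pmf (unif_bits r) (unif_bits s))"
    by (simp add: pair_pmf_def map_bind_pmf map_pmf_def bind_assoc_pmf bind_return_pmf)
  also have "\<dots> = map_pmf (\<lambda>(xs, ys). xs @ ys) (pmf_of_set (?A \<times> ?B))"
    unfolding unif_bits_def
    by (subst pair_pmf_of_set)
        (simp_all only: finite_bit_strings bit_strings_nonempty not_False_eq_True)
  also have "\<dots> = pmf_of_set ((\<lambda>(xs, ys). xs @ ys) ` (?A \<times> ?B))"
    using bit_strings_nonempty[of r] bit_strings_nonempty[of s]
    by (intro map_pmf_of_set_inj) (auto simp: inj_on_def finite_bit_strings)
  also have "(\<lambda>(xs, ys). xs @ ys) ` (?A \<times> ?B) = {zs. length zs = r + s}"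
  proof (intro set_eqI iffI)
    fix zs :: "bool list"
    assume "zs \<in> {zs. length zs = r + s}"
    then have "zs = (\<lambda>(xs, ys). xs @ ys) (take r zs, drop r zs)" "(take r zs, drop r zs) \<in> ?A \<times> ?B"
      by auto
    then show "zs \<in> (\<lambda>(xs, ys). xs @ ys) ` (?A \<times> ?B)"
      by blast
  qed auto
  finally show ?thesis
    by (simp add: unif_bits_def)
qed

section \<open>Entropy\<close>

lemma gibbs_inequality:
  assumes fin: "finite (set_pmf p)"
    and pos: "\<And>x. x \<in> set_pmf p \<Longrightarrow> w x > 0"
    and sum_w: "(\<Sum>x\<in>set_pmf p. w x) \<le> 1"
  shows "(\<Sum>x\<in>set_pmf p. pmf p x * log 2 (w x / pmf p x)) \<le> 0"
proof -
  have "(\<Sum>x\<in>set_pmf p. pmf p x * log 2 (w x / pmf p x))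
      \<le> (\<Sum>x\<in>set_pmf p. (w x - pmf p x) / ln 2)"
  proof (intro sum_mono)
    fix x
    assume x: "x \<in> set_pmf p"
    then have "pmf p x > 0" "w x > 0"
      using pos by (auto simp: pmf_positive)
    then have "pmf p x * ln (w x / pmf p x) \<le> pmf p x * (w x / pmf p x - 1)"
      by (intro mult_left_mono ln_le_minus_one) auto
    also have "\<dots> = w x - pmf p x"
      using \<open>pmf p x > 0\<close> by (simp add: field_simps)
    finally show "pmf p x * log 2 (w x / pmf p x) \<le> (w x - pmf p x) / ln 2"
      by (simp add: log_def divide_right_mono)
  qed
  also have "\<dots> = ((\<Sum>x\<in>set_pmf p. w x) - 1) / ln 2"
    using fin by (simp add: sum_divide_distrib[symmetric] sum_subtractf sum_pmf_eq_1)
  also have "\<dots> \<le> 0"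
    using sum_w by (simp add: divide_nonpos_pos)
  finally show ?thesis .
qed

lemma sum_set_pmf_map_pmf:
  assumes "finite (set_pmf p)"
  shows "(\<Sum>x\<in>set_pmf p. pmf p x * f (g x)) = (\<Sum>y\<in>set_pmf (map_pmf g p). pmf (map_pmf g p) y * f y)"
proof -
  have "(\<Sum>x\<in>set_pmf p. pmf p x * f (g x)) = measure_pmf.expectation p (\<lambda>x. f (g x))"
    using assms by (subst integral_measure_pmf[of "set_pmf p"]) auto
  also have "\<dots> = measure_pmf.expectation (map_pmf g p) f"
    by (rule integral_map_pmf[symmetric])
  also have "\<dots> = (\<Sum>y\<in>set_pmf (map_pmf g p). pmf (map_pmf g p) y * f y)"
    using assms by (subst integral_measure_pmf[of "set_pmf (map_pmf g p)"]) auto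
  finally show ?thesis .
qed

lemma entropy2_pair_le:
  fixes p :: "('a \<times> 'b) pmf"
  assumes fin: "finite (set_pmf p)"
  shows "entropy2 p \<le> entropy2 (map_pmf fst p) + entropy2 (map_pmf snd p)"
proof -
  let ?p1 = "map_pmf fst p" and ?p2 = "map_pmf snd p"
  define w where "w z = pmf ?p1 (fst z) * pmf ?p2 (snd z)" for z
  have pos: "pmf p z > 0" "pmf ?p1 (fst z) > 0" "pmf ?p2 (snd z) > 0" if "z \<in> set_pmf p" for z
    using that by (auto simp: pmf_positive)
  then have pos_w: "w z > 0" if "z \<in> set_pmf p" for z
    using that by (simp add: w_def)
  have "(\<Sum>z\<in>set_pmf p. w z) \<le> (\<Sum>z\<in>set_pmf ?p1 \<times> set_pmf ?p2. w z)"
    using fin by (intro sum_mono2) (force simp: w_def)+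
  also have "\<dots> = (\<Sum>a\<in>set_pmf ?p1. pmf ?p1 a) * (\<Sum>b\<in>set_pmf ?p2. pmf ?p2 b)"
    by (simp add: w_def sum_product sum.cartesian_product case_prod_beta)
  also have "\<dots> = 1"
    using fin by (simp add: sum_pmf_eq_1)
  finally have sum_w: "(\<Sum>z\<in>set_pmf p. w z) \<le> 1" .
  have H1: "entropy2 ?p1 = - (\<Sum>z\<in>set_pmf p. pmf p z * log 2 (pmf ?p1 (fst z)))"
    unfolding entropy2_def using sum_set_pmf_map_pmf[OF fin, of "\<lambda>a. log 2 (pmf ?p1 a)" fst] by simp
  have H2: "entropy2 ?p2 = - (\<Sum>z\<in>set_pmf p. pmf p z * log 2 (pmf ?p2 (snd z)))"
    unfolding entropy2_def using sum_set_pmf_map_pmf[OF fin, of "\<lambda>a. log 2 (pmf ?p2 a)" snd] by simp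
  have "entropy2 p - entropy2 ?p1 - entropy2 ?p2
      = (\<Sum>z\<in>set_pmf p. pmf p z
          * (log 2 (pmf ?p1 (fst z)) + log 2 (pmf ?p2 (snd z)) - log 2 (pmf p z)))"
    unfolding H1 H2 by (simp add: entropy2_def algebra_simps sum.distrib sum_subtractf)
  also have "\<dots> = (\<Sum>z\<in>set_pmf p. pmf p z * log 2 (w z / pmf p z))"
  proof (intro sum.cong refl)
    fix z
    assume "z \<in> set_pmf p"
    with pos[of z] show "pmf p z
        * (log 2 (pmf ?p1 (fst z)) + log 2 (pmf ?p2 (snd z)) - log 2 (pmf p z))
        = pmf p z * log 2 (w z / pmf p z)"
      by (simp add: w_def log_divide log_mult)
  qed
  also have "\<dots> \<le> 0"
    using fin pos_w sum_w by (rule gibbs_inequality)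
  finally show ?thesis
    by simp
qed

lemma cond_entropy2_add_mutual_info2: "cond_entropy2 p + mutual_info2 p = entropy2 (map_pmf fst p)"
  by (simp add: cond_entropy2_def mutual_info2_def)

lemma cond_entropy2_le_entropy2:
  "finite (set_pmf p) \<Longrightarrow> cond_entropy2 p \<le> entropy2 (map_pmf fst p)"
  using entropy2_pair_le[of p] by (simp add: cond_entropy2_def)

lemma map_pmf_fst_q_Xl_ZXprev:
  assumes "l \<in> {1..L}"
  shows "map_pmf fst (q_Xl_ZXprev L qX W l) = qX l"
proof -
  have "map_pmf fst (q_Xl_ZXprev L qX W l) = map_pmf (\<lambda>x. x ! (l - 1)) (q_XL L qX)"
    unfolding q_Xl_ZXprev_def q_joint_def
    by (simp add: map_pmf_comp map_bind_pmf case_prod_beta bind_pmf_const flip: map_pmf_def)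
  also have "\<dots> = qX l"
    unfolding q_XL_def using assms by (subst map_pmf_nth_list_pmf) (auto simp del: upt_Suc)
  finally show ?thesis .
qed

lemma finite_set_q_Xl_ZXprev:
  fixes W :: "bool list \<Rightarrow> 'z::finite pmf"
  shows "finite (set_pmf (q_Xl_ZXprev L qX W l))"
  unfolding q_Xl_ZXprev_def q_joint_def q_XL_def set_map_pmf set_bind_pmf
  by (intro finite_imageI finite_UN_I finite_set_list_pmf) auto

section \<open>The leftover hash lemma\<close>

lemma sum_abs_diff_mean_squared_le:
  fixes a :: "'a \<Rightarrow> real"
  assumes "finite A"
  shows "(\<Sum>z\<in>A. \<bar>a z - sum a A / card A\<bar>)\<^sup>2 \<le> card A * (\<Sum>z\<in>A. (a z)\<^sup>2) - (sum a A)\<^sup>2"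
proof (cases "A = {}")
  case False
  define \<mu> where "\<mu> = sum a A / card A"
  have n: "real (card A) > 0"
    using assms False by (simp add: card_gt_0_iff)
  have "(\<Sum>z\<in>A. \<bar>a z - \<mu>\<bar>)\<^sup>2 \<le> (\<Sum>z\<in>A. \<bar>a z - \<mu>\<bar>\<^sup>2) * card A"
    by (rule sum_squared_le_sum_of_squares)
  also have "(\<Sum>z\<in>A. \<bar>a z - \<mu>\<bar>\<^sup>2) = (\<Sum>z\<in>A. (a z)\<^sup>2) - 2 * \<mu> * sum a A + card A * \<mu>\<^sup>2"
    by (simp add: power2_diff sum.distrib sum_subtractf sum_distrib_left sum_distrib_right mult_ac)
  also have "(\<dots>) * card A = card A * (\<Sum>z\<in>A. (a z)\<^sup>2) - (sum a A)\<^sup>2"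
    using n by (simp add: \<mu>_def power2_eq_square field_simps)
  finally show ?thesis
    unfolding \<mu>_def .
qed simp

lemma sum_preimage_squared:
  fixes w :: "'a \<Rightarrow> real"
  assumes "finite T" "finite Y" "g ` T \<subseteq> Y"
  shows "(\<Sum>y\<in>Y. (sum w {x\<in>T. g x = y})\<^sup>2) = (\<Sum>x\<in>T. \<Sum>x'\<in>T. if g x = g x' then w x * w x' else 0)"
proof -
  have "(\<Sum>y\<in>Y. (sum w {x\<in>T. g x = y})\<^sup>2)
      = (\<Sum>y\<in>Y. \<Sum>x\<in>T. \<Sum>x'\<in>T. if y = g x then (if g x = g x' then w x * w x' else 0) else 0)"
    using assms(1)
    by (simp add: power2_eq_square sum.inter_filter sum_product) (intro sum.cong refl; auto)
  also have "\<dots> = (\<Sum>x\<in>T. \<Sum>x'\<in>T. \<Sum>y\<in>Y. if y = g x then (if g x = g x' then w x * w x' else 0) else 0)"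
    by (simp add: sum.swap[of _ Y])
  also have "\<dots> = (\<Sum>x\<in>T. \<Sum>x'\<in>T. if g x = g x' then w x * w x' else 0)"
    using assms by (intro sum.cong refl) (auto simp: sum.delta image_subset_iff)
  finally show ?thesis .
qed

lemma two_universal_collision_bound:
  fixes w :: "bool list \<Rightarrow> real"
  assumes tu: "two_universal N r F"
    and T: "T \<subseteq> {x. length x = N}" and w: "\<And>x. x \<in> T \<Longrightarrow> w x \<ge> 0"
  shows "(\<Sum>g\<in>F. \<Sum>y\<in>{y. length y = r}. (sum w {x\<in>T. g x = y})\<^sup>2)
    \<le> card F * ((\<Sum>x\<in>T. (w x)\<^sup>2) + (sum w T)\<^sup>2 / 2 ^ r)"
proof -
  have F: "finite F" and len: "\<And>g x. g \<in> F \<Longrightarrow> length x = N \<Longrightarrow> length (g x) = r"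
    and coll: "\<And>x x'. length x = N \<Longrightarrow> length x' = N \<Longrightarrow> x \<noteq> x' \<Longrightarrow>
      real (card {g\<in>F. g x = g x'}) \<le> card F / 2 ^ r"
    using tu unfolding two_universal_def by auto
  have finT: "finite T"
    using T finite_bit_strings finite_subset by blast
  have "(\<Sum>g\<in>F. \<Sum>y\<in>{y. length y = r}. (sum w {x\<in>T. g x = y})\<^sup>2)
      = (\<Sum>g\<in>F. \<Sum>x\<in>T. \<Sum>x'\<in>T. if g x = g x' then w x * w x' else 0)"
    using finT T len by (intro sum.cong refl sum_preimage_squared) (auto simp: finite_bit_strings)
  also have "\<dots> = (\<Sum>x\<in>T. \<Sum>x'\<in>T. \<Sum>g\<in>F. if g x = g x' then w x * w x' else 0)"
    by (subst sum.swap) (simp add: sum.swap[of _ F])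
  also have "\<dots> = (\<Sum>x\<in>T. \<Sum>x'\<in>T. w x * w x' * card {g\<in>F. g x = g x'})"
    using F by (simp add: sum.inter_filter[symmetric] mult_ac)
  also have "\<dots> \<le> (\<Sum>x\<in>T. \<Sum>x'\<in>T. w x * w x' * ((if x = x' then card F else 0) + card F / 2 ^ r))"
  proof (intro sum_mono mult_left_mono)
    fix x x'
    assume "x \<in> T" "x' \<in> T"
    with T coll[of x x']
    show "real (card {g\<in>F. g x = g x'}) \<le> (if x = x' then card F else 0) + card F / 2 ^ r"
      by (cases "x = x'") auto
    show "0 \<le> w x * w x'"
      using w \<open>x \<in> T\<close> \<open>x' \<in> T\<close> by simp
  qed
  also have "\<dots>
      = (\<Sum>x\<in>T. \<Sum>x'\<in>T. (if x' = x then card F * (w x)\<^sup>2 else 0) + card F / 2 ^ r * (w x * w x'))"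
    by (intro sum.cong refl) (auto simp: power2_eq_square algebra_simps)
  also have "\<dots> = card F * ((\<Sum>x\<in>T. (w x)\<^sup>2) + (sum w T)\<^sup>2 / 2 ^ r)"
    using finT by (simp add: sum.distrib sum_distrib_left power2_eq_square sum_product algebra_simps
        sum_divide_distrib[symmetric])
  finally show ?thesis .
qed

lemma two_universal_hash_l1_bound:
  fixes w :: "bool list \<Rightarrow> real"
  assumes tu: "two_universal N r F" and T: "T \<subseteq> {x. length x = N}"
    and w: "\<And>x. x \<in> T \<Longrightarrow> 0 \<le> w x \<and> w x \<le> \<beta>" and sum_w: "sum w T \<le> 1" and "\<beta> \<ge> 0"
  shows "(\<Sum>(g, y)\<in>F \<times> {y. length y = r}.
      \<bar>sum w {x\<in>T. g x = y} / card F - sum w T / (real (card F) * 2 ^ r)\<bar>) \<le> sqrt (2 ^ r * \<beta>)"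
proof -
  let ?Y = "{y :: bool list. length y = r}"
  define a where "a = (\<lambda>(g :: bool list \<Rightarrow> bool list, y). sum w {x\<in>T. g x = y} / card F)"
  have F: "finite F" "F \<noteq> {}" "card F > 0"
    and len: "\<And>g x. g \<in> F \<Longrightarrow> length x = N \<Longrightarrow> length (g x) = r"
    using tu unfolding two_universal_def by (auto simp: card_gt_0_iff)
  have finT: "finite T"
    using T finite_bit_strings finite_subset by blast
  have card: "real (card (F \<times> ?Y)) = card F * 2 ^ r"
    by (simp add: card_cartesian_product card_bit_strings)
  have "(\<Sum>y\<in>?Y. sum w {x\<in>T. g x = y}) = sum w T" if "g \<in> F" for g
    using finT T len[OF that] by (intro sum.group) (auto simp: finite_bit_strings)
  then have sum_a: "sum a (F \<times> ?Y) = sum w T"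
    using F by (simp add: a_def sum.cartesian_product' sum_divide_distrib[symmetric])
  have "(\<Sum>z\<in>F \<times> ?Y. (a z)\<^sup>2) = (\<Sum>g\<in>F. \<Sum>y\<in>?Y. (sum w {x\<in>T. g x = y})\<^sup>2) / (card F)\<^sup>2"
    by (simp add: a_def sum.cartesian_product' power_divide flip: sum_divide_distrib)
  also have "\<dots> \<le> card F * ((\<Sum>x\<in>T. (w x)\<^sup>2) + (sum w T)\<^sup>2 / 2 ^ r) / (card F)\<^sup>2"
    using w by (intro divide_right_mono two_universal_collision_bound[OF tu T]) auto
  finally have "card F * 2 ^ r * (\<Sum>z\<in>F \<times> ?Y. (a z)\<^sup>2)
      \<le> card F * 2 ^ r * (card F * ((\<Sum>x\<in>T. (w x)\<^sup>2) + (sum w T)\<^sup>2 / 2 ^ r) / (card F)\<^sup>2)"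
    by (intro mult_left_mono) auto
  also have "\<dots> = 2 ^ r * (\<Sum>x\<in>T. (w x)\<^sup>2) + (sum w T)\<^sup>2"
    using F by (simp add: field_simps power2_eq_square)
  also have "\<dots> \<le> 2 ^ r * \<beta> + (sum w T)\<^sup>2"
  proof -
    have "(\<Sum>x\<in>T. (w x)\<^sup>2) \<le> (\<Sum>x\<in>T. \<beta> * w x)"
      using w by (intro sum_mono) (auto simp: power2_eq_square intro: mult_right_mono)
    also have "\<dots> \<le> \<beta>"
      using sum_w \<open>\<beta> \<ge> 0\<close> by (simp add: sum_distrib_left[symmetric] mult_left_le)
    finally show ?thesis
      by simp
  qed
  finally have "(\<Sum>z\<in>F \<times> ?Y. \<bar>a z - sum a (F \<times> ?Y) / card (F \<times> ?Y)\<bar>)\<^sup>2 \<le> 2 ^ r * \<beta>"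
    using sum_abs_diff_mean_squared_le[of "F \<times> ?Y" a] F card sum_a by (simp add: finite_bit_strings)
  then show ?thesis
    using card sum_a by (simp add: a_def case_prod_beta real_le_rsqrt)
qed

lemma pmf_bind_pmf_of_set_Pair:
  assumes "finite F" "g \<in> F"
  shows "pmf (bind_pmf (pmf_of_set F) (\<lambda>G. map_pmf (Pair G) (K G))) (g, y) = pmf (K g) y / card F"
proof -
  have "pmf (map_pmf (Pair G) (K G)) (g, y) = (if G = g then pmf (K g) y else 0)" for G
  proof (cases "G = g")
    case True
    have "inj (Pair g)"
      by (simp add: inj_def)
    then show ?thesis
      using True pmf_map_inj'[of "Pair g" "K g" y] by simp
  qed (auto simp: pmf_eq_0_set_pmf)
  then show ?thesis
    using assms by (subst pmf_bind_pmf_of_set) (auto simp: sum.delta')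
qed

lemma pmf_bind_pmf_of_set_hash:
  assumes "finite F" "g \<in> F" "finite S" "set_pmf Q \<subseteq> S"
  shows "pmf (bind_pmf (pmf_of_set F) (\<lambda>G. map_pmf (\<lambda>x. (G, G x)) Q)) (g, y)
    = sum (pmf Q) {x\<in>S. g x = y} / card F"
proof -
  have "pmf (map_pmf g Q) y = sum (pmf Q) {x\<in>S. g x = y}"
    using assms(3,4)
    by (simp add: map_pmf_def pmf_bind_pmf_eq_sum[of S] sum.inter_filter indicator_def
        Int_def cong: if_cong)
  then show ?thesis
    using assms(1,2) pmf_bind_pmf_of_set_Pair[of F g "\<lambda>G. map_pmf G Q" y]
    by (simp add: map_pmf_comp)
qed

lemma pmf_bind_pmf_of_set_Pair_unif_bits:
  assumes "finite F" "g \<in> F" "length y = r"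
  shows "pmf (bind_pmf (pmf_of_set F) (\<lambda>G. map_pmf (Pair G) (unif_bits r))) (g, y)
      = 1 / (card F * 2 ^ r)"
  using assms pmf_bind_pmf_of_set_Pair[of F g "\<lambda>_. unif_bits r" y]
    finite_bit_strings[of r] bit_strings_nonempty[of r]
  by (simp add: unif_bits_def card_bit_strings)

lemma prob_pmf_gt_eq_sum:
  assumes "finite S" "set_pmf Q \<subseteq> S" "\<beta> \<ge> 0"
  shows "measure_pmf.prob Q {x. \<beta> < pmf Q x} = sum (pmf Q) {x\<in>S. \<beta> < pmf Q x}"
    and "sum (pmf Q) {x\<in>S. pmf Q x \<le> \<beta>} + sum (pmf Q) {x\<in>S. \<beta> < pmf Q x} = 1"
proof -
  have "x \<in> set_pmf Q" if "\<beta> < pmf Q x" for x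
    using that assms(3) by (simp add: set_pmf_iff)
  then have "{x. \<beta> < pmf Q x} = {x\<in>S. \<beta> < pmf Q x}"
    using assms(2) by auto
  then show "measure_pmf.prob Q {x. \<beta> < pmf Q x} = sum (pmf Q) {x\<in>S. \<beta> < pmf Q x}"
    using assms(1) by (simp add: measure_measure_pmf_finite)
  have "sum (pmf Q) {x\<in>S. pmf Q x \<le> \<beta>} + sum (pmf Q) {x\<in>S. \<beta> < pmf Q x} = sum (pmf Q) S"
    using assms(1) by (subst sum.union_disjoint[symmetric]) (auto intro!: sum.cong)
  then show "sum (pmf Q) {x\<in>S. pmf Q x \<le> \<beta>} + sum (pmf Q) {x\<in>S. \<beta> < pmf Q x} = 1"
    using assms(1,2) by (simp add: sum_pmf_eq_1)
qed

lemma sum_abs_split_le: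
  fixes a b u :: "'a \<Rightarrow> real"
  assumes "\<And>z. z \<in> Z \<Longrightarrow> b z \<ge> 0" "\<And>z. z \<in> Z \<Longrightarrow> u z \<ge> 0" "c \<le> 1"
  shows "(\<Sum>z\<in>Z. \<bar>a z + b z - u z\<bar>) \<le> (\<Sum>z\<in>Z. \<bar>a z - c * u z\<bar>) + sum b Z + (1 - c) * sum u Z"
proof -
  have "\<bar>a z + b z - u z\<bar> \<le> \<bar>a z - c * u z\<bar> + b z + (1 - c) * u z" if "z \<in> Z" for z
  proof -
    have "b z \<ge> 0" "(1 - c) * u z \<ge> 0"
      using assms that by simp_all
    moreover have "a z + b z - u z = (a z - c * u z) + b z - (1 - c) * u z"
      by (simp add: algebra_simps)
    ultimately show ?thesis
      by simp
  qed
  then have "(\<Sum>z\<in>Z. \<bar>a z + b z - u z\<bar>) \<le> (\<Sum>z\<in>Z. \<bar>a z - c * u z\<bar> + b z + (1 - c) * u z)"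
    by (rule sum_mono)
  also have "\<dots> = (\<Sum>z\<in>Z. \<bar>a z - c * u z\<bar>) + sum b Z + (1 - c) * sum u Z"
    by (simp add: sum.distrib sum_distrib_left)
  finally show ?thesis .
qed

text \<open>Split the source into its light part (point probabilities at most \<beta>), whose hash is close to
  uniform by the collision bound, and its heavy part, which is charged in full.\<close>

lemma leftover_hash:
  assumes tu: "two_universal N r F" and Q: "set_pmf Q \<subseteq> {x. length x = N}" and "\<beta> \<ge> 0"
  shows "var_dist (bind_pmf (pmf_of_set F) (\<lambda>G. map_pmf (\<lambda>x. (G, G x)) Q))
                  (bind_pmf (pmf_of_set F) (\<lambda>G. map_pmf (Pair G) (unif_bits r)))
         \<le> sqrt (2 ^ r * \<beta>) + 2 * measure_pmf.prob Q {x. \<beta> < pmf Q x}"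
proof -
  let ?S = "{x :: bool list. length x = N}" and ?Y = "{y :: bool list. length y = r}"
  define T where "T = {x\<in>?S. pmf Q x \<le> \<beta>}"
  define C where "C = {x\<in>?S. \<beta> < pmf Q x}"
  define h where "h A
      = (\<lambda>(g :: bool list \<Rightarrow> bool list, y). sum (pmf Q) {x\<in>A. g x = y} / card F)" for A
  define u :: real where "u = 1 / (card F * 2 ^ r)"
  have F: "finite F" "F \<noteq> {}" and len: "\<And>g x. g \<in> F \<Longrightarrow> length x = N \<Longrightarrow> length (g x) = r"
    using tu unfolding two_universal_def by auto
  have fin: "finite T" "finite C" "T \<inter> C = {}" "T \<union> C = ?S"
    using finite_bit_strings by (auto simp: T_def C_def)
  have heavy: "measure_pmf.prob Q {x. \<beta> < pmf Q x} = sum (pmf Q) C"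
    "sum (pmf Q) T + sum (pmf Q) C = 1"
    unfolding T_def C_def using prob_pmf_gt_eq_sum[OF finite_bit_strings Q \<open>\<beta> \<ge> 0\<close>] by simp_all
  have "(\<Sum>y\<in>?Y. sum (pmf Q) {x\<in>C. g x = y}) = sum (pmf Q) C" if "g \<in> F" for g
    using fin len[OF that] by (intro sum.group) (auto simp: finite_bit_strings C_def)
  then have sum_C: "(\<Sum>z\<in>F \<times> ?Y. h C z) = sum (pmf Q) C"
    using F by (simp add: h_def sum.cartesian_product' sum_divide_distrib[symmetric])
  have split: "h ?S z = h T z + h C z" for z
  proof -
    have "{x\<in>?S. g x = y} = {x\<in>T. g x = y} \<union> {x\<in>C. g x = y}"
      "{x\<in>T. g x = y} \<inter> {x\<in>C. g x = y} = {}" for g :: "bool list \<Rightarrow> bool list" and y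
      using fin(3,4) by blast+
    then show ?thesis
      using fin(1,2) by (simp add: h_def sum.union_disjoint add_divide_distrib split: prod.splits)
  qed
  have pmf_hash: "pmf (bind_pmf (pmf_of_set F) (\<lambda>G. map_pmf (\<lambda>x. (G, G x)) Q)) z = h ?S z"
    and pmf_unif: "pmf (bind_pmf (pmf_of_set F) (\<lambda>G. map_pmf (Pair G) (unif_bits r))) z = u"
    if "z \<in> F \<times> ?Y" for z
  proof -
    from that obtain g y where z: "z = (g, y)" "g \<in> F" "length y = r"
      by auto
    show "pmf (bind_pmf (pmf_of_set F) (\<lambda>G. map_pmf (\<lambda>x. (G, G x)) Q)) z = h ?S z"
      by (simp only: z(1) h_def prod.case
          pmf_bind_pmf_of_set_hash[OF F(1) z(2) finite_bit_strings Q])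
    from z show "pmf (bind_pmf (pmf_of_set F) (\<lambda>G. map_pmf (Pair G) (unif_bits r))) z = u"
      by (simp add: u_def pmf_bind_pmf_of_set_Pair_unif_bits[OF F(1)])
  qed
  have "var_dist (bind_pmf (pmf_of_set F) (\<lambda>G. map_pmf (\<lambda>x. (G, G x)) Q))
                 (bind_pmf (pmf_of_set F) (\<lambda>G. map_pmf (Pair G) (unif_bits r)))
      = (\<Sum>z\<in>F \<times> ?Y. \<bar>pmf (bind_pmf (pmf_of_set F) (\<lambda>G. map_pmf (\<lambda>x. (G, G x)) Q)) z
          - pmf (bind_pmf (pmf_of_set F) (\<lambda>G. map_pmf (Pair G) (unif_bits r))) z\<bar>)"
    using F Q len by (intro var_dist_eq_sum) (auto simp: finite_bit_strings set_pmf_unif_bits)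
  also have "\<dots> = (\<Sum>z\<in>F \<times> ?Y. \<bar>h T z + h C z - u\<bar>)"
  proof (rule sum.cong[OF refl])
    fix z
    assume z: "z \<in> F \<times> ?Y"
    show "\<bar>pmf (bind_pmf (pmf_of_set F) (\<lambda>G. map_pmf (\<lambda>x. (G, G x)) Q)) z
        - pmf (bind_pmf (pmf_of_set F) (\<lambda>G. map_pmf (Pair G) (unif_bits r))) z\<bar>
        = \<bar>h T z + h C z - u\<bar>"
      by (subst pmf_hash[OF z], subst pmf_unif[OF z], subst split) (rule refl)
  qed
  also have "\<dots> \<le> (\<Sum>z\<in>F \<times> ?Y. \<bar>h T z - sum (pmf Q) T * u\<bar>) + sum (h C) (F \<times> ?Y)
      + (1 - sum (pmf Q) T) * (\<Sum>z\<in>F \<times> ?Y. u)"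
    using heavy(2) sum_nonneg[of C "pmf Q"]
    by (intro sum_abs_split_le) (auto simp: h_def u_def intro!: divide_nonneg_nonneg sum_nonneg)
  also have "(\<Sum>z\<in>F \<times> ?Y. \<bar>h T z - sum (pmf Q) T * u\<bar>) \<le> sqrt (2 ^ r * \<beta>)"
  proof -
    have eq: "(\<lambda>z. \<bar>h T z - sum (pmf Q) T * u\<bar>) = (\<lambda>(g, y).
        \<bar>sum (pmf Q) {x\<in>T. g x = y} / card F - sum (pmf Q) T / (real (card F) * 2 ^ r)\<bar>)"
      by (auto simp: h_def u_def)
    have "sum (pmf Q) T \<le> 1"
      using heavy(2) sum_nonneg[of C "pmf Q"] by simp
    then show ?thesis
      unfolding eq using \<open>\<beta> \<ge> 0\<close> by (intro two_universal_hash_l1_bound[OF tu]) (auto simp: T_def)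
  qed
  also have "(\<Sum>z\<in>F \<times> ?Y. u) = 1"
    using F by (simp add: u_def card_cartesian_product card_bit_strings)
  finally show ?thesis
    using heavy sum_C by simp
qed

section \<open>Concentration of the self-information of i.i.d. sequences\<close>

lemma exp_minus_le_quadratic:
  assumes "(y::real) \<ge> 0"
  shows "exp (- y) \<le> 1 - y + y\<^sup>2 / 2"
proof -
  let ?f = "\<lambda>y::real. 1 - y + y\<^sup>2 / 2 - exp (- y)"
  have "?f 0 \<le> ?f y"
  proof (rule DERIV_nonneg_imp_nondecreasing[OF assms])
    fix x :: real
    have "(?f has_real_derivative (-1 + x + exp (- x))) (at x)"
      by (auto intro!: derivative_eq_intros simp: power2_eq_square)
    moreover have "0 \<le> -1 + x + exp (- x)"
      using exp_ge_add_one_self[of "- x"] by linarith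
    ultimately show "\<exists>d. (?f has_real_derivative d) (at x) \<and> 0 \<le> d"
      by blast
  qed
  then show ?thesis
    by simp
qed

lemma mult_ln_squared_le:
  assumes "(t::real) > 0" "t \<le> 1"
  shows "t * (ln t)\<^sup>2 \<le> 16 / 25"
proof -
  define s where "s = sqrt t"
  have s: "s > 0" "s \<le> 1" "t = s\<^sup>2"
    using assms by (auto simp: s_def)
  have "ln (1 / s) - 1 = ln ((1 / s) / exp 1)"
    using s(1) by (simp add: ln_div ln_mult)
  also have "\<dots> \<le> (1 / s) / exp 1 - 1"
    using s(1) by (intro ln_le_minus_one) simp
  finally have "ln (1 / s) \<le> (1 / s) / exp 1"
    by simp
  then have "s * ln (1 / s) \<le> s * ((1 / s) / exp 1)"
    using s(1) by (intro mult_left_mono) auto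
  also have "\<dots> \<le> 2 / 5"
    using s(1) exp_lower_Taylor_quadratic[of 1] by (simp add: field_simps)
  finally have "(s * ln (1 / s))\<^sup>2 \<le> (2 / 5)\<^sup>2"
    using s by (intro power_mono) auto
  then have "(s * ln (1 / s))\<^sup>2 \<le> 4 / 25"
    by (simp add: power_divide)
  moreover have "ln t = 2 * ln s"
    using s by (simp add: ln_realpow)
  then have "t * (ln t)\<^sup>2 = 4 * (s * ln (1 / s))\<^sup>2"
    using s by (simp add: ln_div power2_eq_square)
  ultimately show ?thesis
    by linarith
qed

text \<open>A second-order bound on the moment generating function of the self-information.\<close>

lemma sum_pmf_powr_le:
  fixes p :: "'a::finite pmf"
  assumes "\<theta> \<ge> 0"
  shows "(\<Sum>a\<in>UNIV. pmf p a powr (1 + \<theta>))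
    \<le> exp (- \<theta> * (ln 2 * entropy2 p) + \<theta>\<^sup>2 * (real CARD('a) * (16 / 25)) / 2)"
proof -
  define u where "u a = - ln (pmf p a)" for a
  have pointwise: "pmf p a powr (1 + \<theta>) \<le> pmf p a * (1 - \<theta> * u a + (\<theta> * u a)\<^sup>2 / 2)" for a
  proof (cases "pmf p a = 0")
    case False
    then have "pmf p a > 0" "u a \<ge> 0"
      by (simp_all add: u_def order.not_eq_order_implies_strict pmf_le_1)
    then have "pmf p a powr (1 + \<theta>) = pmf p a * exp (- (\<theta> * u a))"
      by (simp add: powr_def u_def algebra_simps exp_add)
    also have "\<dots> \<le> pmf p a * (1 - \<theta> * u a + (\<theta> * u a)\<^sup>2 / 2)"
      using \<open>pmf p a > 0\<close> \<open>u a \<ge> 0\<close> assms by (intro mult_left_mono exp_minus_le_quadratic) auto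
    finally show ?thesis .
  qed simp
  have entropy: "(\<Sum>a\<in>UNIV. pmf p a * u a) = ln 2 * entropy2 p"
  proof -
    have "entropy2 p = - (\<Sum>a\<in>UNIV. pmf p a * log 2 (pmf p a))"
      unfolding entropy2_def
      by (subst sum.mono_neutral_left[of UNIV "set_pmf p"]) (auto simp: set_pmf_eq)
    then show ?thesis
      by (simp add: u_def log_def sum_negf sum_divide_distrib[symmetric])
  qed
  have second_moment: "(\<Sum>a\<in>UNIV. pmf p a * (u a)\<^sup>2) \<le> real CARD('a) * (16 / 25)"
  proof -
    have "pmf p a * (u a)\<^sup>2 \<le> 16 / 25" for a
      using mult_ln_squared_le[of "pmf p a"]
      by (cases "pmf p a = 0") (simp_all add: u_def order.not_eq_order_implies_strict pmf_le_1)
    then show ?thesis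
      using sum_mono[of UNIV "\<lambda>a. pmf p a * (u a)\<^sup>2" "\<lambda>_. 16 / 25"] by simp
  qed
  have "(\<Sum>a\<in>UNIV. pmf p a powr (1 + \<theta>)) \<le> (\<Sum>a\<in>UNIV. pmf p a * (1 - \<theta> * u a + (\<theta> * u a)\<^sup>2 / 2))"
    by (intro sum_mono pointwise)
  also have "\<dots> = 1 - \<theta> * (\<Sum>a\<in>UNIV. pmf p a * u a) + \<theta>\<^sup>2 / 2 * (\<Sum>a\<in>UNIV. pmf p a * (u a)\<^sup>2)"
    by (simp add: sum.distrib sum_subtractf sum_distrib_left algebra_simps power2_eq_square
        sum_pmf_eq_1)
  also have "\<dots> \<le> 1 + (- \<theta> * (ln 2 * entropy2 p) + \<theta>\<^sup>2 * (real CARD('a) * (16 / 25)) / 2)"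
    using mult_left_mono[OF second_moment, of "\<theta>\<^sup>2 / 2"] by (simp add: entropy)
  also have "\<dots> \<le> exp (- \<theta> * (ln 2 * entropy2 p) + \<theta>\<^sup>2 * (real CARD('a) * (16 / 25)) / 2)"
    by (rule exp_ge_add_one_self)
  finally show ?thesis .
qed

lemma prod_list_powr:
  fixes xs :: "real list"
  assumes "\<And>x. x \<in> set xs \<Longrightarrow> x \<ge> 0"
  shows "prod_list xs powr a = prod_list (map (\<lambda>x. x powr a) xs)"
  using assms by (induction xs) (simp_all add: powr_mult prod_list_nonneg)

lemma prob_replicate_pmf_gt_le:
  fixes p :: "'a::finite pmf"
  assumes "\<beta> > 0" "\<theta> \<ge> 0"
  shows "measure_pmf.prob (replicate_pmf n p) {x. \<beta> < pmf (replicate_pmf n p) x}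
    \<le> \<beta> powr (- \<theta>) * (\<Sum>a\<in>UNIV. pmf p a powr (1 + \<theta>)) ^ n"
proof -
  let ?q = "replicate_pmf n p" and ?S = "{xs :: 'a list. length xs = n}"
  have S: "finite ?S"
    using finite_lists_length_eq[of "UNIV :: 'a set" n] by simp
  have "x \<in> set_pmf ?q" if "\<beta> < pmf ?q x" for x
    using that assms(1) by (simp add: set_pmf_iff)
  then have sub: "{x. \<beta> < pmf ?q x} \<subseteq> ?S"
    by (auto simp: set_replicate_pmf)
  have "measure_pmf.prob ?q {x. \<beta> < pmf ?q x} = (\<Sum>x\<in>{x. \<beta> < pmf ?q x}. pmf ?q x)"
    using finite_subset[OF sub S] by (rule measure_measure_pmf_finite)
  also have "\<dots> \<le> (\<Sum>x\<in>{x. \<beta> < pmf ?q x}. \<beta> powr (- \<theta>) * pmf ?q x powr (1 + \<theta>))"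
  proof (intro sum_mono)
    fix x
    assume "x \<in> {x. \<beta> < pmf ?q x}"
    then have "1 \<le> (pmf ?q x / \<beta>) powr \<theta>"
      using assms by (intro ge_one_powr_ge_zero) auto
    then have "pmf ?q x \<le> pmf ?q x * (pmf ?q x / \<beta>) powr \<theta>"
      by (simp add: mult_le_cancel_left1)
    also have "\<dots> = \<beta> powr (- \<theta>) * pmf ?q x powr (1 + \<theta>)"
      using \<open>x \<in> _\<close> assms by (simp add: powr_divide powr_add powr_minus field_simps)
    finally show "pmf ?q x \<le> \<beta> powr (- \<theta>) * pmf ?q x powr (1 + \<theta>)" .
  qed
  also have "\<dots> \<le> (\<Sum>x\<in>?S. \<beta> powr (- \<theta>) * pmf ?q x powr (1 + \<theta>))"
    using S sub by (intro sum_mono2) auto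
  also have "\<dots> = \<beta> powr (- \<theta>) * (\<Sum>x\<in>?S. prod_list (map (\<lambda>a. pmf p a powr (1 + \<theta>)) x))"
  proof -
    have "pmf ?q x powr (1 + \<theta>) = prod_list (map (\<lambda>a. pmf p a powr (1 + \<theta>)) x)"
      if "length x = n" for x
      using that by (simp add: pmf_replicate_pmf) (subst prod_list_powr, auto simp: o_def)
    then show ?thesis
      by (simp add: sum_distrib_left)
  qed
  also have "\<dots> = \<beta> powr (- \<theta>) * (\<Sum>a\<in>UNIV. pmf p a powr (1 + \<theta>)) ^ n"
    by (simp add: sum_prod_list_lists_length)
  finally show ?thesis .
qed

definition delta_star :: "nat \<Rightarrow> nat \<Rightarrow> real" where
  "delta_star L N = log 2 (2 ^ L + 3) * sqrt (2 / real N * (real L + log 2 (real N)))"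

lemma delta_star_nonneg:
  assumes "N > 0"
  shows "delta_star L N \<ge> 0"
proof -
  have "(1::real) \<le> 2 ^ L"
    by simp
  then have "log 2 (2 ^ L + 3) \<ge> 0"
    by (subst zero_le_log_cancel_iff) linarith+
  moreover have "log 2 (real N) \<ge> 0"
    using assms by simp
  ultimately show ?thesis
    unfolding delta_star_def by simp
qed

lemma ln_le_delta_star_squared:
  assumes "N > 0"
  shows "ln (real N) \<le> real N * (ln 2 * delta_star L N)\<^sup>2 * (25 / 64)"
proof -
  define A :: real where "A = 2 ^ L + 3"
  have "(1::real) \<le> 2 ^ L"
    by simp
  then have "ln (4 :: real) \<le> ln A"
    unfolding A_def by (subst ln_le_cancel_iff) linarith+
  then have lnA: "2 * ln 2 \<le> ln A"
    using ln_realpow[of 2 2] by simp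
  have logN: "log 2 (real N) \<ge> 0"
    using assms by simp
  have ln2: "ln (2 :: real) \<ge> 1 / 2"
    using ln_le_minus_one[of "1 / 2 :: real"] by (simp add: ln_div)
  have "real N * (ln 2 * delta_star L N)\<^sup>2 = 2 * (ln A)\<^sup>2 * (real L + log 2 (real N))"
    using assms logN by (simp add: delta_star_def A_def log_def power_mult_distrib)
  also have "\<dots> \<ge> 2 * (2 * ln 2)\<^sup>2 * log 2 (real N)"
    using lnA ln2 logN by (intro mult_mono power_mono) auto
  finally have "real N * (ln 2 * delta_star L N)\<^sup>2 \<ge> 8 * ln 2 * ln (real N)"
    by (simp add: log_def power2_eq_square)
  moreover have "8 * ln 2 * ln (real N) \<ge> 64 / 25 * ln (real N)"
    using ln2 assms by (intro mult_right_mono) auto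
  ultimately show ?thesis
    by linarith
qed

lemma prob_replicate_pmf_atypical_le:
  fixes p :: "bool pmf"
  assumes N: "N > 0" and R: "R \<le> real N * (entropy2 p - delta_star L N)"
  shows "measure_pmf.prob (replicate_pmf N p) {x. 2 powr (- R) < pmf (replicate_pmf N p) x}
      \<le> 1 / real N"
proof -
  define \<tau> where "\<tau> = ln 2 * delta_star L N"
  \<comment> \<open>the minimiser of the Chernoff exponent below\<close>
  define \<theta> where "\<theta> = \<tau> * (25 / 32)"
  define E where "E = - \<theta> * (ln 2 * entropy2 p) + \<theta>\<^sup>2 * (32 / 25) / 2"
  have "\<tau> \<ge> 0"
    using delta_star_nonneg[OF N] by (simp add: \<tau>_def)
  then have \<theta>: "\<theta> \<ge> 0"
    by (simp add: \<theta>_def)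
  have "measure_pmf.prob (replicate_pmf N p) {x. 2 powr (- R) < pmf (replicate_pmf N p) x}
      \<le> (2 powr (- R)) powr (- \<theta>) * (\<Sum>b\<in>UNIV. pmf p b powr (1 + \<theta>)) ^ N"
    using \<theta> by (intro prob_replicate_pmf_gt_le) auto
  also have "\<dots> \<le> exp (\<theta> * R * ln 2) * exp E ^ N"
  proof (rule mult_mono)
    show "(2 powr (- R)) powr (- \<theta>) \<le> exp (\<theta> * R * ln 2)"
      by (simp add: powr_powr powr_def mult_ac)
    show "(\<Sum>b\<in>UNIV. pmf p b powr (1 + \<theta>)) ^ N \<le> exp E ^ N"
      using sum_pmf_powr_le[OF \<theta>, of p] unfolding E_def
      by (intro power_mono) (auto intro: sum_nonneg)
  qed (auto intro!: zero_le_power sum_nonneg)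
  also have "\<dots> = exp (\<theta> * R * ln 2 + real N * E)"
    by (simp add: exp_add exp_of_nat_mult)
  also have "\<dots> \<le> exp (- (real N * \<tau>\<^sup>2 * (25 / 64)))"
  proof -
    have "\<theta> * R * ln 2 \<le> \<theta> * (real N * (entropy2 p - delta_star L N)) * ln 2"
      using R \<theta> by (intro mult_right_mono mult_left_mono) auto
    moreover have "\<theta> * (real N * (entropy2 p - delta_star L N)) * ln 2 + real N * E
        = - (real N * \<tau>\<^sup>2 * (25 / 64))"
      unfolding E_def \<theta>_def \<tau>_def by (simp add: field_simps power2_eq_square)
    ultimately show ?thesis
      by simp
  qed
  also have "\<dots> \<le> exp (- ln (real N))"
    using ln_le_delta_star_squared[OF N, of L] by (simp add: \<tau>_def)
  also have "\<dots> = 1 / real N"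
    using N by (simp add: exp_minus inverse_eq_divide)
  finally show ?thesis .
qed

section \<open>Marginal distribution of a block\<close>

text \<open>The channel input of user l in block n + 1 (note the shift) when its hash function is G.\<close>

primrec encoder_chain :: "(nat \<Rightarrow> bool list \<Rightarrow> bool list) \<Rightarrow> (nat \<Rightarrow> nat) \<Rightarrow> (nat \<Rightarrow> nat) \<Rightarrow> nat
    \<Rightarrow> (bool list \<Rightarrow> bool list) \<Rightarrow> nat \<Rightarrow> bool list pmf" where
  "encoder_chain enc m s l G 0 = map_pmf (enc l) (unif_bits (m l))"
| "encoder_chain enc m s l G (Suc n) =
     bind_pmf (encoder_chain enc m s l G n) (\<lambda>x. map_pmf (\<lambda>E. enc l (G x @ E)) (unif_bits (s l)))"

lemma finite_set_encoder_chain: "finite (set_pmf (encoder_chain enc m s l G n))"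
  by (induction n) (auto simp: set_bind_pmf set_pmf_unif_bits finite_bit_strings)

lemma length_set_inputs_run: "Xs \<in> set_pmf (inputs_run L enc m s Gs n) \<Longrightarrow> length Xs = n"
  by (induction n arbitrary: Xs) (auto simp: set_bind_pmf)

lemma map_pmf_last_inputs_run:
  "map_pmf last (inputs_run L enc m s Gs (Suc n))
   = list_pmf (map (\<lambda>l. encoder_chain enc m s l (Gs ! (l - 1)) n) [1..<L+1])"
proof (induction n)
  case 0
  then show ?case
    by (simp add: map_pmf_comp first_block_def bind_return_pmf del: upt_Suc)
next
  case (Suc n)
  have "map_pmf last (inputs_run L enc m s Gs (Suc (Suc n)))
      = bind_pmf (inputs_run L enc m s Gs (Suc n)) (\<lambda>Xs. next_block L enc s Gs (last Xs))"
    unfolding inputs_run.simps(2)[of _ _ _ _ _ "Suc n"] map_bind_pmf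
    by (intro bind_pmf_cong refl) (auto dest: length_set_inputs_run simp: map_pmf_comp)
  also have "\<dots> = bind_pmf (map_pmf last (inputs_run L enc m s Gs (Suc n))) (next_block L enc s Gs)"
    by (simp add: bind_map_pmf)
  also have "\<dots> = list_pmf (map (\<lambda>l. encoder_chain enc m s l (Gs ! (l - 1)) (Suc n)) [1..<L+1])"
    unfolding Suc.IH next_block_def encoder_chain.simps
    using list_pmf_bind_upt[of "\<lambda>l. encoder_chain enc m s l (Gs ! (l - 1)) n" 1 "L + 1"
        "\<lambda>l x. map_pmf (\<lambda>E. enc l ((Gs ! (l - 1)) x @ E)) (unif_bits (s l))"]
    by (simp del: upt_Suc)
  finally show ?case .
qed

lemma map_pmf_nth_inputs_run:
  assumes "1 \<le> i" "i \<le> k"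
  shows "map_pmf (\<lambda>Xss. Xss ! (i - 1)) (inputs_run L enc m s Gs k)
      = map_pmf last (inputs_run L enc m s Gs i)"
  using assms(2)
proof (induction k)
  case (Suc k)
  show ?case
  proof (cases "i = Suc k")
    case True
    then show ?thesis
      by (intro map_pmf_cong refl) (auto dest!: length_set_inputs_run simp: last_conv_nth)
  next
    case False
    then have "i \<le> k" "i - 1 < k"
      using Suc.prems assms(1) by simp_all
    have "map_pmf (\<lambda>Xss. Xss ! (i - 1)) (inputs_run L enc m s Gs (Suc k))
        = map_pmf (\<lambda>Xss. Xss ! (i - 1)) (inputs_run L enc m s Gs k)"
      unfolding inputs_run.simps(2) map_bind_pmf map_pmf_comp
      using \<open>i - 1 < k\<close>
      by (subst map_pmf_def, intro bind_pmf_cong refl)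
        (auto dest!: length_set_inputs_run simp: nth_append map_pmf_const)
    then show ?thesis
      using Suc.IH[OF \<open>i \<le> k\<close>] by simp
  qed
qed (use assms in simp)

lemma scheme_block_eq:
  assumes "1 \<le> i" "i \<le> k"
  shows "scheme_block L N W F enc m s k i
    = bind_pmf (list_pmf
        (map (\<lambda>l. bind_pmf (pmf_of_set (F l)) (\<lambda>G. encoder_chain enc m s l G (i - 1))) [1..<L+1]))
        (channel_block N W)"
proof -
  let ?Gs = "list_pmf (map (\<lambda>l. pmf_of_set (F l)) [1..<L+1])"
  have "scheme_block L N W F enc m s k i
     = bind_pmf ?Gs
         (\<lambda>Gs. bind_pmf (inputs_run L enc m s Gs k) (\<lambda>Xss. channel_block N W (Xss ! (i - 1))))"
    unfolding scheme_block_def scheme_def map_bind_pmf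
    using assms
    by (intro bind_pmf_cong refl) (auto dest!: length_set_inputs_run simp: map_pmf_nth_list_pmf)
  also have "\<dots>
      = bind_pmf ?Gs (\<lambda>Gs. bind_pmf (map_pmf last (inputs_run L enc m s Gs i)) (channel_block N W))"
    by (simp add: map_pmf_nth_inputs_run[OF assms, symmetric] bind_map_pmf)
  also have "\<dots> = bind_pmf ?Gs (\<lambda>Gs. bind_pmf
      (list_pmf (map (\<lambda>l. encoder_chain enc m s l (Gs ! (l - 1)) (i - 1)) [1..<L+1]))
          (channel_block N W))"
    using assms map_pmf_last_inputs_run[of L enc m s _ "i - 1"] by simp
  also have "\<dots>
      = bind_pmf (list_pmf
          (map (\<lambda>l. bind_pmf (pmf_of_set (F l)) (\<lambda>G. encoder_chain enc m s l G (i - 1))) [1..<L+1]))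
        (channel_block N W)"
    using list_pmf_bind_upt[of "\<lambda>l. pmf_of_set (F l)" 1 "L + 1"
        "\<lambda>l G. encoder_chain enc m s l G (i - 1)"]
    by (simp add: bind_assoc_pmf[symmetric] del: upt_Suc)
  finally show ?thesis .
qed

lemma q_block_eq:
  "q_block L N qX W
      = bind_pmf (list_pmf (map (\<lambda>l. replicate_pmf N (qX l)) [1..<L+1])) (channel_block N W)"
  unfolding q_block_def q_joint_def q_XL_def replicate_pmf_bind_Pair replicate_pmf_list_pmf
  by (simp add: bind_map_pmf channel_block_def[abs_def] columns_def Let_def o_def del: upt_Suc)

lemma finite_set_channel_block:
  fixes W :: "bool list \<Rightarrow> 'z::finite pmf"
  shows "finite (set_pmf (channel_block N W Xb))"
  unfolding channel_block_def Let_def by (auto intro!: finite_set_list_pmf)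

lemma var_dist_scheme_block_le:
  fixes W :: "bool list \<Rightarrow> 'z::finite pmf"
  assumes "1 \<le> i" "i \<le> k"
    and F: "\<And>l. l \<in> {1..L} \<Longrightarrow> finite (F l) \<and> F l \<noteq> {}"
    and user: "\<And>l. l \<in> {1..L} \<Longrightarrow>
      var_dist (bind_pmf (pmf_of_set (F l)) (\<lambda>G. encoder_chain enc m s l G (i - 1)))
          (replicate_pmf N (qX l)) \<le> \<epsilon>"
  shows "var_dist (scheme_block L N W F enc m s k i) (q_block L N qX W) \<le> real L * \<epsilon>"
proof -
  let ?P = "\<lambda>l. bind_pmf (pmf_of_set (F l)) (\<lambda>G. encoder_chain enc m s l G (i - 1))"
  let ?Q = "\<lambda>l. replicate_pmf N (qX l)"
  have fin: "finite (set_pmf (?P l)) \<and> finite (set_pmf (?Q l))" if "l \<in> set [1..<L+1]" for l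
    using that F[of l]
    by (auto simp: set_bind_pmf finite_set_encoder_chain finite_set_replicate_pmf)
  have "var_dist (scheme_block L N W F enc m s k i) (q_block L N qX W)
      \<le> var_dist (list_pmf (map ?P [1..<L+1])) (list_pmf (map ?Q [1..<L+1]))"
    unfolding scheme_block_eq[OF assms(1,2)] q_block_eq using fin
    by (intro var_dist_bind_pmf_le finite_set_list_pmf finite_set_channel_block)
        (auto simp del: upt_Suc)
  also have "\<dots> \<le> (\<Sum>l\<leftarrow>[1..<L+1]. var_dist (?P l) (?Q l))"
    using fin by (rule var_dist_list_pmf_le_sum)
  also have "\<dots> \<le> (\<Sum>l\<leftarrow>[1..<L+1]. \<epsilon>)"
    using user by (intro sum_list_mono) (simp del: upt_Suc)
  also have "\<dots> = real L * \<epsilon>"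
    by (simp add: sum_list_triv del: upt_Suc)
  finally show ?thesis .
qed

section \<open>Per-user analysis\<close>

lemma var_dist_encoder_chain_le:
  fixes D :: "(bool list \<Rightarrow> bool list) pmf" and Q :: "bool list pmf"
  assumes D: "finite (set_pmf D)" and Q: "finite (set_pmf Q)"
    and rs: "r + s l = m l"
    and enc: "var_dist (map_pmf (enc l) (unif_bits (m l))) Q \<le> \<delta>"
    and hash: "var_dist (bind_pmf D (\<lambda>G. map_pmf (\<lambda>x. (G, G x)) Q))
      (bind_pmf D (\<lambda>G. map_pmf (Pair G) (unif_bits r))) \<le> \<eta>"
  shows "var_dist (bind_pmf D (\<lambda>G. map_pmf (Pair G) (encoder_chain enc m s l G n)))
    (bind_pmf D (\<lambda>G. map_pmf (Pair G) Q)) \<le> \<delta> + real n * (\<eta> + \<delta>)"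
proof (induction n)
  case 0
  show ?case
    using var_dist_Pair_le[OF D _ Q, of "map_pmf (enc l) (unif_bits (m l))"] enc
    by (simp add: set_pmf_unif_bits finite_bit_strings)
next
  case (Suc n)
  define J where "J = bind_pmf D (\<lambda>G. map_pmf (Pair G) (encoder_chain enc m s l G n))"
  define T where "T = bind_pmf D (\<lambda>G. map_pmf (Pair G) Q)"
  define K where "K
      = (\<lambda>(G :: bool list \<Rightarrow> bool list, x). map_pmf (\<lambda>E. (G, enc l (G x @ E))) (unif_bits (s l)))"
  define K' where "K'
      = (\<lambda>(G :: bool list \<Rightarrow> bool list, y). map_pmf (\<lambda>E. (G, enc l (y @ E))) (unif_bits (s l)))"
  define H where "H = bind_pmf D (\<lambda>G. map_pmf (\<lambda>x. (G, G x)) Q)"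
  define U where "U = bind_pmf D (\<lambda>G. map_pmf (Pair G) (unif_bits r))"
  have fin: "finite (set_pmf J)" "finite (set_pmf T)" "finite (set_pmf H)" "finite (set_pmf U)"
    "\<And>z. finite (set_pmf (K z))" "\<And>z. finite (set_pmf (K' z))"
    using D Q
    by (auto simp: J_def T_def H_def U_def K_def K'_def set_bind_pmf finite_set_encoder_chain
        set_pmf_unif_bits finite_bit_strings split: prod.splits)
  have step: "bind_pmf D (\<lambda>G. map_pmf (Pair G) (encoder_chain enc m s l G (Suc n))) = bind_pmf J K"
    unfolding J_def K_def by (simp add: bind_assoc_pmf bind_map_pmf map_bind_pmf map_pmf_comp)
  have ideal_step: "bind_pmf T K = bind_pmf H K'"
    unfolding T_def K_def H_def K'_def
    by (simp add: bind_assoc_pmf bind_map_pmf map_bind_pmf map_pmf_comp)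
  have uniform_step: "bind_pmf U K'
      = bind_pmf D (\<lambda>G. map_pmf (Pair G) (map_pmf (enc l) (unif_bits (m l))))"
    unfolding U_def K'_def rs[symmetric] unif_bits_append[symmetric]
    by (simp add: bind_assoc_pmf bind_map_pmf map_bind_pmf map_pmf_comp)
  have "var_dist (bind_pmf T K) T \<le> var_dist (bind_pmf H K') (bind_pmf U K')
      + var_dist (bind_pmf U K') T"
    unfolding ideal_step using fin by (intro var_dist_triangle) (auto simp: set_bind_pmf)
  also have "\<dots> \<le> \<eta> + \<delta>"
  proof (rule add_mono)
    show "var_dist (bind_pmf H K') (bind_pmf U K') \<le> \<eta>"
      using var_dist_bind_pmf_le[of H U K'] fin hash by (simp add: H_def U_def)
    show "var_dist (bind_pmf U K') T \<le> \<delta>"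
      using var_dist_Pair_le[OF D _ Q, of "map_pmf (enc l) (unif_bits (m l))"] enc
      by (simp add: uniform_step T_def set_pmf_unif_bits finite_bit_strings)
  qed
  finally have "var_dist (bind_pmf T K) T \<le> \<eta> + \<delta>" .
  moreover have "var_dist (bind_pmf J K) (bind_pmf T K) \<le> var_dist J T"
    using fin by (intro var_dist_bind_pmf_le) auto
  moreover have "var_dist (bind_pmf J K) T \<le> var_dist (bind_pmf J K) (bind_pmf T K)
      + var_dist (bind_pmf T K) T"
    using fin by (intro var_dist_triangle) (auto simp: set_bind_pmf)
  ultimately show ?case
    using Suc.IH unfolding step J_def[symmetric] T_def[symmetric] by (simp add: algebra_simps)
qed

lemma var_dist_user_block_le:
  fixes p :: "bool pmf"
  assumes tu: "two_universal N r F" and N: "N > 0"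
    and rs: "r + s l = m l"
    and rate: "real r + real N * \<xi> \<le> real N * (entropy2 p - delta_star L N)"
    and enc: "var_dist (map_pmf (enc l) (unif_bits (m l))) (replicate_pmf N p) \<le> \<delta>"
  shows "var_dist (bind_pmf (pmf_of_set F) (\<lambda>G. encoder_chain enc m s l G n)) (replicate_pmf N p)
    \<le> \<delta> + real n * (2 powr (- real N * \<xi> / 2) + 2 / real N + \<delta>)"
proof -
  let ?D = "pmf_of_set F" and ?Q = "replicate_pmf N p"
  define R where "R = real r + real N * \<xi>"
  have F: "finite F" "F \<noteq> {}"
    using tu by (simp_all add: two_universal_def)
  have fin: "finite (set_pmf ?D)" "finite (set_pmf ?Q)"
    using F by (simp_all add: finite_set_replicate_pmf)
  have "var_dist (bind_pmf ?D (\<lambda>G. map_pmf (\<lambda>x. (G, G x)) ?Q))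
      (bind_pmf ?D (\<lambda>G. map_pmf (Pair G) (unif_bits r)))
      \<le> sqrt (2 ^ r * 2 powr (- R)) + 2 * measure_pmf.prob ?Q {x. 2 powr (- R) < pmf ?Q x}"
    by (rule leftover_hash[OF tu]) (auto simp: set_replicate_pmf)
  also have "sqrt (2 ^ r * 2 powr (- R)) = 2 powr (- real N * \<xi> / 2)"
    by (simp add: R_def powr_realpow[symmetric] powr_add[symmetric] powr_half_sqrt[symmetric]
        powr_powr)
  also have "measure_pmf.prob ?Q {x. 2 powr (- R) < pmf ?Q x} \<le> 1 / real N"
    using rate by (intro prob_replicate_pmf_atypical_le[OF N]) (simp add: R_def)
  finally have hash: "var_dist (bind_pmf ?D (\<lambda>G. map_pmf (\<lambda>x. (G, G x)) ?Q))
      (bind_pmf ?D (\<lambda>G. map_pmf (Pair G) (unif_bits r))) \<le> 2 powr (- real N * \<xi> / 2) + 2 / real N"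
    by simp
  have "var_dist (map_pmf snd (bind_pmf ?D (\<lambda>G. map_pmf (Pair G) (encoder_chain enc m s l G n))))
      (map_pmf snd (bind_pmf ?D (\<lambda>G. map_pmf (Pair G) ?Q)))
    \<le> var_dist (bind_pmf ?D (\<lambda>G. map_pmf (Pair G) (encoder_chain enc m s l G n)))
        (bind_pmf ?D (\<lambda>G. map_pmf (Pair G) ?Q))"
    using fin by (intro var_dist_map_pmf_le) (auto simp: set_bind_pmf finite_set_encoder_chain)
  also have "\<dots> \<le> \<delta> + real n * (2 powr (- real N * \<xi> / 2) + 2 / real N + \<delta>)"
    by (rule var_dist_encoder_chain_le[where enc = enc and l = l and m = m and s = s,
          OF fin rs enc hash])
  finally show ?thesis
    by (simp add: map_bind_pmf map_pmf_comp bind_pmf_const)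
qed

section \<open>Rates and accumulation of the error\<close>

lemma rate_balance_q_Xl_ZXprev:
  fixes W :: "bool list \<Rightarrow> 'z::finite pmf" and N r s m :: nat
  assumes l: "l \<in> {1..L}"
    and r: "real r = real N * (cond_entropy2 (q_Xl_ZXprev L qX W l) - 2 * (d + \<xi>) / 2)"
    and m: "real m = real N * (entropy2 (qX l) + 2 * (d + \<xi>) / 2)"
    and s: "real s = real N * (mutual_info2 (q_Xl_ZXprev L qX W l) + 2 * (d + \<xi>))"
  shows "r + s = m" and "real r + real N * \<xi> \<le> real N * (entropy2 (qX l) - d)"
proof -
  let ?p = "q_Xl_ZXprev L qX W l"
  have H: "cond_entropy2 ?p + mutual_info2 ?p = entropy2 (qX l)"
    "cond_entropy2 ?p \<le> entropy2 (qX l)"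
    using cond_entropy2_add_mutual_info2[of ?p]
      cond_entropy2_le_entropy2[OF finite_set_q_Xl_ZXprev[of L qX W l]]
    unfolding map_pmf_fst_q_Xl_ZXprev[OF l] by auto
  have "real r + real s = real m"
    unfolding r m s H(1)[symmetric] by (simp add: algebra_simps)
  then show "r + s = m"
    by linarith
  have "real r + real N * \<xi> = real N * (cond_entropy2 ?p - d)"
    unfolding r by (simp add: algebra_simps)
  also have "\<dots> \<le> real N * (entropy2 (qX l) - d)"
    using H(2) by (intro mult_left_mono) auto
  finally show "real r + real N * \<xi> \<le> real N * (entropy2 (qX l) - d)" .
qed

lemma of_nat_le_geometric_quotient:
  assumes "(x::real) > 1"
  shows "real n \<le> (x ^ n - 1) / (x - 1)"
proof -
  have "real n = (\<Sum>j<n. 1)"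
    by simp
  also have "\<dots> \<le> (\<Sum>j<n. x ^ j)"
    using assms by (intro sum_mono one_le_power) auto
  also have "\<dots> = (x ^ n - 1) / (x - 1)"
    using assms by (simp add: sum_gp_strict field_simps)
  finally show ?thesis .
qed

lemma linear_le_geometric_error_bound:
  assumes "L \<ge> 2" "i \<ge> 1" "\<delta> \<ge> 0" "0 \<le> \<eta>" "\<eta> \<le> d"
  shows "real L * (\<delta> + real (i - 1) * (\<eta> + \<delta>))
    \<le> real L * (\<delta> + d) * ((real L ^ i - 1) / (real L - 1)) + real L ^ (i + 1) * \<delta>"
proof -
  have "\<delta> + real (i - 1) * (\<eta> + \<delta>) \<le> real i * (\<delta> + d)"
    using assms mult_left_mono[of \<eta> d "real (i - 1)"] by (simp add: of_nat_diff algebra_simps)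
  also have "\<dots> \<le> (real L ^ i - 1) / (real L - 1) * (\<delta> + d)"
    using assms of_nat_le_geometric_quotient[of "real L" i] by (intro mult_right_mono) auto
  finally have "real L * (\<delta> + real (i - 1) * (\<eta> + \<delta>))
      \<le> real L * ((real L ^ i - 1) / (real L - 1) * (\<delta> + d))"
    by (intro mult_left_mono) auto
  moreover have "real L ^ (i + 1) * \<delta> \<ge> 0"
    using assms by simp
  ultimately show ?thesis
    by (simp add: mult_ac)
qed

theorem lemma10:
  fixes L N k i :: nat
    and \<xi> \<delta> :: real
    and qX :: "nat \<Rightarrow> bool pmf"
    and W :: "bool list \<Rightarrow> 'z::finite pmf"
    and F :: "nat \<Rightarrow> (bool list \<Rightarrow> bool list) set"
    and enc :: "nat \<Rightarrow> bool list \<Rightarrow> bool list"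
    and r m s :: "nat \<Rightarrow> nat"
  assumes L2: "L \<ge> 2"
    and N_pos: "N > 0"
    and xi_pos: "\<xi> > 0"
    and i_range: "i \<in> {1..k}"
    and r_def: "\<And>l. l \<in> {1..L} \<Longrightarrow> real (r l) = real N *
       (cond_entropy2 (q_Xl_ZXprev L qX W l)
        - (2 * (log 2 (2 ^ L + 3) * sqrt (2 / real N * (real L + log 2 (real N))) + \<xi>)) / 2)"
    and m_def: "\<And>l. l \<in> {1..L} \<Longrightarrow> real (m l) = real N *
       (entropy2 (qX l)
        + (2 * (log 2 (2 ^ L + 3) * sqrt (2 / real N * (real L + log 2 (real N))) + \<xi>)) / 2)"
    and s_def: "\<And>l. l \<in> {1..L} \<Longrightarrow> real (s l) = real N *
       (mutual_info2 (q_Xl_ZXprev L qX W l)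
        + 2 * (log 2 (2 ^ L + 3) * sqrt (2 / real N * (real L + log 2 (real N))) + \<xi>))"
    and hash: "\<And>l. l \<in> {1..L} \<Longrightarrow> two_universal N (r l) (F l)"
    and enc_len: "\<And>l E. l \<in> {1..L} \<Longrightarrow> length E = m l \<Longrightarrow> length (enc l E) = N"
    and enc_approx: "\<And>l. l \<in> {1..L} \<Longrightarrow>
       var_dist (map_pmf (enc l) (unif_bits (m l))) (replicate_pmf N (qX l)) \<le> \<delta>"
  shows "var_dist (scheme_block L N W F enc m s k i) (q_block L N qX W)
     \<le> real L * (\<delta> + (2 / real N + 2 powr (real L / 2) * 2 powr (- real N * \<xi> / 2)))
         * ((real L ^ i - 1) / (real L - 1))
       + real L ^ (i + 1) * \<delta>"
proof -
  define \<eta> where "\<eta> = 2 powr (- real N * \<xi> / 2) + 2 / real N"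
  have "1 \<in> {1..L}"
    using L2 by simp
  then have \<delta>_nonneg: "\<delta> \<ge> 0"
    using enc_approx var_dist_nonneg order_trans by blast
  have user: "var_dist (bind_pmf (pmf_of_set (F l)) (\<lambda>G. encoder_chain enc m s l G (i - 1)))
      (replicate_pmf N (qX l)) \<le> \<delta> + real (i - 1) * (\<eta> + \<delta>)" if l: "l \<in> {1..L}" for l
    using rate_balance_q_Xl_ZXprev[OF l r_def[OF l] m_def[OF l] s_def[OF l]]
    unfolding \<eta>_def delta_star_def[symmetric]
    by (rule var_dist_user_block_le[where enc = enc and m = m and s = s and l = l,
          OF hash[OF l] N_pos _ _ enc_approx[OF l]])
  have "var_dist (scheme_block L N W F enc m s k i) (q_block L N qX W)
      \<le> real L * (\<delta> + real (i - 1) * (\<eta> + \<delta>))"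
    using i_range hash user by (intro var_dist_scheme_block_le) (auto simp: two_universal_def)
  also have "\<dots> \<le> real L * (\<delta> + (2 / real N + 2 powr (real L / 2) * 2 powr (- real N * \<xi> / 2)))
      * ((real L ^ i - 1) / (real L - 1)) + real L ^ (i + 1) * \<delta>"
  proof (rule linear_le_geometric_error_bound)
    have "2 powr (- real N * \<xi> / 2) \<le> 2 powr (real L / 2) * 2 powr (- real N * \<xi> / 2)"
      using ge_one_powr_ge_zero[of 2 "real L / 2"] by (simp add: mult_le_cancel_right1)
    then show "\<eta> \<le> 2 / real N + 2 powr (real L / 2) * 2 powr (- real N * \<xi> / 2)"
      by (simp add: \<eta>_def)
  qed (use L2 i_range \<delta>_nonneg in \<open>auto simp: \<eta>_def\<close>)
  finally show ?thesis .
qed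

end
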